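(* Let $q\ge1$, $d=2^q$. For $\tau\in\boldsymbol{\sigma}_q$ let $\mathcal{C}_q^\tau=\{C\in\mathcal{C}_q: C\tau C^\dagger=\pm\tau\}$. Let $V=\mathrm{span}\{\sigma\otimes\hat\sigma:\sigma,\hat\sigma\in\boldsymbol{\sigma}_q,\ \sigma\neq\hat\sigma\}\subseteq\mathcal{M}_d^{\otimes2}$ and, for $\tau\in\boldsymbol{\sigma}_q$, $V^\tau=\mathrm{span}\{\sigma\otimes\hat\sigma:\sigma,\hat\sigma\in\boldsymbol{\sigma}_q,\ \sigma\hat\sigma\in\mathbb{C}\tau\}$. Then: (1) $V=\bigoplus_{\tau'\in\boldsymbol{\sigma}_q}V^{\tau'}$. (2) Suppose that for some $\tau\in\boldsymbol{\sigma}_q$ there is a subspace $W^\tau\subseteq V^\tau$ with $\varphi^{\otimes2}(\hat C)W^\tau\subseteq W^\tau$ for all $\hat C\in\mathcal{C}_q^\tau$. Then for every $\tau'\in\boldsymbol{\sigma}_q$ there exists a subspace $W^{\tau'}\subseteq V^{\tau'}$ isomorphic to $W^\tau$ (with $W^{\tau'}$ for $\tau'=\tau$ being $W^\tau$) such that $W=\bigoplus_{\tau'\in\boldsymbol{\sigma}_q}W^{\tau'}$ satisfies $\varphi^{\otimes2}(C)W\subseteq W$ for all $C\in\mathcal{C}_q$.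
   Context: $\mathcal{M}_d$ is the space of complex $d\times d$ matrices. $X,Y,Z$ are the single-qubit Pauli matrices; $\hat{\mathcal{P}}_q$ is the set of $q$-fold tensor products of elements of $\{\mathbb{1},X,Y,Z\}$; $\boldsymbol{\sigma}_q=\{P/\sqrt d:P\in\hat{\mathcal P}_q\setminus\{\mathbb 1\}\}$. The Pauli group $\mathcal{P}_q\subset U(2^q)$ consists of all $q$-fold tensor products of elements of the group generated by $X,Z,i\mathbb 1_2$; the Clifford group is $\mathcal{C}_q=\{U\in U(2^q):U\mathcal{P}_qU^\dagger\subseteq\mathcal{P}_q\}/U(1)$ (conjugation by $C$ maps each element of $\boldsymbol\sigma_q$ to $\pm$ an element of $\boldsymbol\sigma_q$). The two-copy representation on $\mathcal{M}_d^{\otimes2}$ is $\varphi^{\otimes2}(C)(A\otimes B)=(CAC^\dagger)\otimes(CBC^\dagger)$, extended linearly. *)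

theory Defs
  imports "Jordan_Normal_Form.Matrix"
begin

definition kron :: "complex mat \<Rightarrow> complex mat \<Rightarrow> complex mat" where
  "kron A B = mat (dim_row A * dim_row B) (dim_col A * dim_col B)
     (\<lambda>(i,j). A $$ (i div dim_row B, j div dim_col B) * B $$ (i mod dim_row B, j mod dim_col B))"

fun kron_list :: "complex mat list \<Rightarrow> complex mat" where
  "kron_list [] = 1\<^sub>m 1"
| "kron_list (A # As) = kron A (kron_list As)"

definition adj :: "complex mat \<Rightarrow> complex mat" where
  "adj A = mat (dim_col A) (dim_row A) (\<lambda>(i,j). cnj (A $$ (j,i)))"

definition pI :: "complex mat" where "pI = 1\<^sub>m 2"
definition pX :: "complex mat" where
  "pX = mat 2 2 (\<lambda>(i,j). if i \<noteq> j then 1 else 0)"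
definition pY :: "complex mat" where
  "pY = mat 2 2 (\<lambda>(i,j). if i = 0 \<and> j = 1 then - \<i> else if i = 1 \<and> j = 0 then \<i> else 0)"
definition pZ :: "complex mat" where
  "pZ = mat 2 2 (\<lambda>(i,j). if i = j then (if i = 0 then 1 else -1) else 0)"

definition pauli_hat :: "nat \<Rightarrow> complex mat set" where
  "pauli_hat q = {kron_list Ps | Ps. length Ps = q \<and> set Ps \<subseteq> {pI, pX, pY, pZ}}"

definition sigma :: "nat \<Rightarrow> complex mat set" where
  "sigma q = {complex_of_real (1 / sqrt (2 ^ q)) \<cdot>\<^sub>m P | P. P \<in> pauli_hat q \<and> P \<noteq> 1\<^sub>m (2 ^ q)}"

text \<open>The group generated by X, Z and i*1 (finite, so closure under products suffices).\<close>
inductive_set pauli1_group :: "complex mat set" where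
  gen_X: "pX \<in> pauli1_group"
| gen_Z: "pZ \<in> pauli1_group"
| gen_i: "\<i> \<cdot>\<^sub>m 1\<^sub>m 2 \<in> pauli1_group"
| mult: "A \<in> pauli1_group \<Longrightarrow> B \<in> pauli1_group \<Longrightarrow> A * B \<in> pauli1_group"

definition pauli_group :: "nat \<Rightarrow> complex mat set" where
  "pauli_group q = {kron_list Ps | Ps. length Ps = q \<and> set Ps \<subseteq> pauli1_group}"

text \<open>Clifford group, represented by its unitary representatives (the U(1) quotient
  is immaterial since the conjugation action does not see global phases).\<close>
definition clifford :: "nat \<Rightarrow> complex mat set" where
  "clifford q = {U. U \<in> carrier_mat (2 ^ q) (2 ^ q) \<and> U * adj U = 1\<^sub>m (2 ^ q) \<and>
                    (\<forall>P \<in> pauli_group q. U * P * adj U \<in> pauli_group q)}"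

definition clifford_stab :: "nat \<Rightarrow> complex mat \<Rightarrow> complex mat set" where
  "clifford_stab q \<tau> = {C \<in> clifford q. C * \<tau> * adj C = \<tau> \<or> C * \<tau> * adj C = - \<tau>}"

text \<open>Two-copy representation on M_d (x) M_d, identified with M_{d^2} via kron:
  (C(x)C)(A(x)B)(C(x)C)^dagger = CAC^dagger (x) CBC^dagger.\<close>
definition phi2 :: "complex mat \<Rightarrow> complex mat \<Rightarrow> complex mat" where
  "phi2 C M = kron C C * M * adj (kron C C)"

definition msum :: "nat \<Rightarrow> ('i \<Rightarrow> complex mat) \<Rightarrow> 'i set \<Rightarrow> complex mat" where
  "msum N f I = mat N N (\<lambda>ij. \<Sum>i\<in>I. f i $$ ij)"

definition mspan :: "nat \<Rightarrow> complex mat set \<Rightarrow> complex mat set" where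
  "mspan N S = {msum N (\<lambda>A. c A \<cdot>\<^sub>m A) F | c F. finite F \<and> F \<subseteq> S}"

definition msubspace :: "nat \<Rightarrow> complex mat set \<Rightarrow> bool" where
  "msubspace N W \<longleftrightarrow> W \<subseteq> carrier_mat N N \<and> 0\<^sub>m N N \<in> W \<and>
     (\<forall>A\<in>W. \<forall>B\<in>W. A + B \<in> W) \<and> (\<forall>c. \<forall>A\<in>W. c \<cdot>\<^sub>m A \<in> W)"

definition dsum :: "nat \<Rightarrow> 'i set \<Rightarrow> ('i \<Rightarrow> complex mat set) \<Rightarrow> complex mat set" where
  "dsum N I W = {msum N f I | f. \<forall>i\<in>I. f i \<in> W i}"

definition is_direct_sum :: "nat \<Rightarrow> complex mat set \<Rightarrow> 'i set \<Rightarrow> ('i \<Rightarrow> complex mat set) \<Rightarrow> bool" where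
  "is_direct_sum N V I W \<longleftrightarrow> V = dsum N I W \<and>
     (\<forall>f. (\<forall>i\<in>I. f i \<in> W i) \<and> msum N f I = 0\<^sub>m N N \<longrightarrow> (\<forall>i\<in>I. f i = 0\<^sub>m N N))"

definition lin_iso :: "complex mat set \<Rightarrow> complex mat set \<Rightarrow> bool" where
  "lin_iso W W' \<longleftrightarrow> (\<exists>f. bij_betw f W W' \<and>
     (\<forall>A\<in>W. \<forall>B\<in>W. f (A + B) = f A + f B) \<and> (\<forall>c. \<forall>A\<in>W. f (c \<cdot>\<^sub>m A) = c \<cdot>\<^sub>m f A))"

definition Vspace :: "nat \<Rightarrow> complex mat set" where
  "Vspace q = mspan (2 ^ q * 2 ^ q)
     {kron s s' | s s'. s \<in> sigma q \<and> s' \<in> sigma q \<and> s \<noteq> s'}"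

definition Vtau :: "nat \<Rightarrow> complex mat \<Rightarrow> complex mat set" where
  "Vtau q \<tau> = mspan (2 ^ q * 2 ^ q)
     {kron s s' | s s'. s \<in> sigma q \<and> s' \<in> sigma q \<and> (\<exists>c. s * s' = c \<cdot>\<^sub>m \<tau>)}"

end

theory Submission
  imports Defs "Jordan_Normal_Form.Determinant"
begin

(*
  Normalised Pauli strings are orthonormal for the Hilbert--Schmidt inner product, and the
  product of two distinct ones is a nonzero multiple of a third. So the generators
  \<sigma> \<otimes> \<sigma>' of V are orthonormal and each lies in exactly one V\<^sup>\<tau>, which gives (1).

  For (2), Clifford conjugation permutes the strings up to sign, and transitively: two
  anticommuting strings P, R are exchanged by (P + R)/\<surd>2, and two commuting non-identity
  strings are linked through a string anticommuting with both. Choose Cliffords C\<^sub>\<tau>' with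
  C\<^sub>\<tau>' \<tau> C\<^sub>\<tau>'\<^sup>\<dagger> = \<tau>' and put W\<^sup>\<tau>' = \<phi>(C\<^sub>\<tau>') W\<^sup>\<tau>. If a Clifford C maps \<tau>' to \<plusminus>\<tau>'', then
  C\<^sub>\<tau>''\<^sup>\<dagger> C C\<^sub>\<tau>' stabilises \<tau> up to sign, hence \<phi>(C) W\<^sup>\<tau>' \<subseteq> W\<^sup>\<tau>''.
*)

lemma sum_lessThan_mult_nat: "(\<Sum>l<(m::nat)*n. f l) = (\<Sum>a<m. \<Sum>b<n. f (a*n+b))"
proof (induction m)
  case (Suc m)
  have "(\<Sum>l\<in>{m*n..<m*n+n}. f l) = (\<Sum>l\<in>{0+m*n..<n+m*n}. f l)" by (simp add: add.commute)
  also have "\<dots> = (\<Sum>b<n. f (b+m*n))" by (simp only: sum.shift_bounds_nat_ivl atLeast0LessThan)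
  finally have "(\<Sum>l\<in>{m*n..<m*n+n}. f l) = (\<Sum>b<n. f (m*n+b))" by (simp add: add.commute)
  moreover have "{..<Suc m * n} = {..<m*n} \<union> {m*n..<m*n+n}" by auto
  ultimately show ?case using Suc by (simp add: sum.union_disjoint ivl_disj_int)
qed simp

lemma mult_add_less_mult_nat: "a < m \<Longrightarrow> b < n \<Longrightarrow> a * n + b < m * (n::nat)"
proof -
  assume "a < m" "b < n"
  hence "a * n + b < (a + 1) * n" and "(a + 1) * n \<le> m * n" by (simp, intro mult_le_mono1, simp)
  thus ?thesis by linarith
qed

lemma kron_carrier [simp]:
  "kron A B \<in> carrier_mat (dim_row A * dim_row B) (dim_col A * dim_col B)"
  by (simp add: kron_def)

lemma dim_kron [simp]:
  "dim_row (kron A B) = dim_row A * dim_row B" "dim_col (kron A B) = dim_col A * dim_col B"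
  by (simp_all add: kron_def)

lemma index_kron [simp]:
  "i < dim_row A * dim_row B \<Longrightarrow> j < dim_col A * dim_col B \<Longrightarrow>
   kron A B $$ (i,j) = A $$ (i div dim_row B, j div dim_col B) * B $$ (i mod dim_row B, j mod dim_col B)"
  by (simp add: kron_def)

lemma kron_mult:
  assumes A: "A \<in> carrier_mat n1 m1" and B: "B \<in> carrier_mat n2 m2"
    and C: "C \<in> carrier_mat m1 k1" and D: "D \<in> carrier_mat m2 k2"
  shows "kron A B * kron C D = kron (A * C) (B * D)"
proof (rule eq_matI)
  fix i j assume "i < dim_row (kron (A*C) (B*D))" and "j < dim_col (kron (A*C) (B*D))"
  hence i: "i < n1*n2" and j: "j < k1*k2" using A B C D by auto
  hence "n2 > 0" "k2 > 0" by (auto intro!: gr0I)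
  hence idx: "i div n2 < n1" "i mod n2 < n2" "j div k2 < k1" "j mod k2 < k2"
    using i j by (auto simp: less_mult_imp_div_less)
  have "(kron A B * kron C D) $$ (i,j) = (\<Sum>l<m1*m2. kron A B $$ (i,l) * kron C D $$ (l,j))"
    using A B C D i j by (simp add: scalar_prod_def lessThan_atLeast0)
  also have "\<dots> = (\<Sum>a<m1. \<Sum>b<m2. (A $$ (i div n2, a) * C $$ (a, j div k2)) *
                                    (B $$ (i mod n2, b) * D $$ (b, j mod k2)))"
    unfolding sum_lessThan_mult_nat
  proof (intro sum.cong refl)
    fix a b assume "a \<in> {..<m1}" "b \<in> {..<m2}"
    hence "a * m2 + b < m1 * m2" "(a * m2 + b) div m2 = a" "(a * m2 + b) mod m2 = b"
      by (auto simp: mult_add_less_mult_nat)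
    thus "kron A B $$ (i, a * m2 + b) * kron C D $$ (a * m2 + b, j) =
      (A $$ (i div n2, a) * C $$ (a, j div k2)) * (B $$ (i mod n2, b) * D $$ (b, j mod k2))"
      using A B C D i j by (simp add: mult_ac)
  qed
  also have "\<dots> = kron (A*C) (B*D) $$ (i,j)"
    using A B C D i j idx by (simp add: sum_product scalar_prod_def lessThan_atLeast0)
  finally show "(kron A B * kron C D) $$ (i,j) = kron (A*C) (B*D) $$ (i,j)" .
qed (use A B C D in auto)

lemma kron_smult_left [simp]: "kron (c \<cdot>\<^sub>m A) B = c \<cdot>\<^sub>m kron A B"
proof (rule eq_matI)
  fix i j assume "i < dim_row (c \<cdot>\<^sub>m kron A B)" "j < dim_col (c \<cdot>\<^sub>m kron A B)"
  hence i: "i < dim_row A * dim_row B" and j: "j < dim_col A * dim_col B" by auto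
  hence "i div dim_row B < dim_row A" "j div dim_col B < dim_col A"
    by (auto simp: less_mult_imp_div_less)
  moreover have "dim_col B > 0" "dim_row B > 0" using i j by (auto intro!: gr0I)
  ultimately show "kron (c \<cdot>\<^sub>m A) B $$ (i,j) = (c \<cdot>\<^sub>m kron A B) $$ (i,j)"
    using i j by simp
qed auto

lemma kron_smult_right [simp]: "kron A (c \<cdot>\<^sub>m B) = c \<cdot>\<^sub>m kron A B"
proof (rule eq_matI)
  fix i j assume "i < dim_row (c \<cdot>\<^sub>m kron A B)" "j < dim_col (c \<cdot>\<^sub>m kron A B)"
  hence i: "i < dim_row A * dim_row B" and j: "j < dim_col A * dim_col B" by auto
  hence "dim_col B > 0" "dim_row B > 0" by (auto intro!: gr0I)
  with i j show "kron A (c \<cdot>\<^sub>m B) $$ (i,j) = (c \<cdot>\<^sub>m kron A B) $$ (i,j)" by simp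
qed auto

lemma kron_one: "kron (1\<^sub>m n) (1\<^sub>m m) = 1\<^sub>m (n*m)"
proof (rule eq_matI)
  fix i j assume "i < dim_row (1\<^sub>m (n*m))" "j < dim_col (1\<^sub>m (n*m))"
  hence i: "i < n*m" and j: "j < n*m" by auto
  hence "m > 0" by (auto intro!: gr0I)
  moreover have "i div m < n" "j div m < n" using i j by (auto simp: less_mult_imp_div_less)
  moreover have "(i div m = j div m \<and> i mod m = j mod m) \<longleftrightarrow> i = j"
    by (metis div_mult_mod_eq)
  ultimately show "kron (1\<^sub>m n) (1\<^sub>m m) $$ (i,j) = 1\<^sub>m (n*m) $$ (i,j)"
    using i j by auto
qed auto

lemma adj_carrier[simp]: "adj A \<in> carrier_mat (dim_col A) (dim_row A)"
  by (simp add: adj_def)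

lemma adj_dims[simp]: "dim_row (adj A) = dim_col A" "dim_col (adj A) = dim_row A"
  by (simp_all add: adj_def)

lemma adj_index[simp]: "i < dim_col A \<Longrightarrow> j < dim_row A
    \<Longrightarrow> adj A $$ (i,j) = cnj (A $$ (j,i))"
  by (simp add: adj_def)

lemma adj_carrier2: "A \<in> carrier_mat n m \<Longrightarrow> adj A \<in> carrier_mat m n"
  unfolding carrier_mat_def by simp

lemma adj_adj[simp]: "adj (adj A) = A"
  by (rule eq_matI) auto

lemma adj_mult: assumes "A \<in> carrier_mat n m" "B \<in> carrier_mat m k"
  shows "adj (A*B) = adj B * adj A"
proof (rule eq_matI)
  fix i j assume "i < dim_row (adj B * adj A)" "j < dim_col (adj B * adj A)"
  hence i: "i < k" and j: "j < n" using assms by auto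
  have "adj (A*B) $$ (i,j) = cnj (\<Sum>l<m. A $$ (j,l) * B $$ (l,i))"
    using assms i j by (simp add: scalar_prod_def lessThan_atLeast0)
  also have "\<dots> = (\<Sum>l<m. cnj (B $$ (l,i)) * cnj (A $$ (j,l)))"
    by (simp add: mult.commute)
  also have "\<dots> = (adj B * adj A) $$ (i,j)"
    using assms i j by (simp add: scalar_prod_def lessThan_atLeast0)
  finally show "adj (A*B) $$ (i,j) = (adj B * adj A) $$ (i,j)" .
qed (use assms in auto)

lemma adj_one[simp]: "adj (1\<^sub>m n) = 1\<^sub>m n"
  by (rule eq_matI) auto

lemma adj_smult[simp]: "adj (c \<cdot>\<^sub>m A) = cnj c \<cdot>\<^sub>m adj A"
  by (rule eq_matI) auto

lemma adj_add: assumes "A \<in> carrier_mat n m" "B \<in> carrier_mat n m"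
  shows "adj (A + B) = adj A + adj B"
  by (rule eq_matI) (use assms in auto)

lemma adj_kron: "adj (kron A B) = kron (adj A) (adj B)"
proof (rule eq_matI)
  fix i j assume i: "i < dim_row (kron (adj A) (adj B))" and j: "j < dim_col (kron (adj A) (adj B))"
  hence i': "i < dim_col A * dim_col B" and j': "j < dim_row A * dim_row B" by auto
  have b: "dim_col B > 0" "dim_row B > 0" using i' j' by (auto intro!: gr0I)
  have "i div dim_col B < dim_col A" "j div dim_row B < dim_row A"
    using i' j' by (auto simp: less_mult_imp_div_less)
  thus "adj (kron A B) $$ (i,j) = kron (adj A) (adj B) $$ (i,j)"
    using i' j' b by simp
qed auto

lemma smult_smult_mat[simp]: "a \<cdot>\<^sub>m (b \<cdot>\<^sub>m A) = (a * b) \<cdot>\<^sub>m (A :: complex mat)"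
  by (rule eq_matI) auto

lemma one_smult_mat[simp]: "(1::complex) \<cdot>\<^sub>m A = A"
  by (rule eq_matI) auto

lemma smult_mult_left[simp]: "dim_col A = dim_row B
    \<Longrightarrow> (k \<cdot>\<^sub>m A) * B = k \<cdot>\<^sub>m (A * (B :: complex mat))"
  by (rule eq_matI) (auto simp: scalar_prod_def sum_distrib_left mult_ac)

lemma smult_mult_right[simp]: "A * (k \<cdot>\<^sub>m B) = k \<cdot>\<^sub>m (A * (B :: complex mat))"
  by (rule eq_matI) (auto simp: scalar_prod_def sum_distrib_left mult_ac)

section \<open>The Hilbert--Schmidt inner product\<close>

definition hs_inner :: "complex mat \<Rightarrow> complex mat \<Rightarrow> complex" where
  "hs_inner A B = (\<Sum>i<dim_row B. \<Sum>j<dim_col B. cnj (A $$ (i,j)) * B $$ (i,j))"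

lemma hs_inner_kron:
  assumes A: "A \<in> carrier_mat n1 m1" and B: "B \<in> carrier_mat n2 m2"
    and C: "C \<in> carrier_mat n1 m1" and D: "D \<in> carrier_mat n2 m2"
  shows "hs_inner (kron A B) (kron C D) = hs_inner A C * hs_inner B D"
proof -
  have "hs_inner (kron A B) (kron C D) = (\<Sum>i<n1*n2. \<Sum>j<m1*m2. cnj (kron A B $$ (i,j)) * kron C D $$ (i,j))"
    using C D by (simp add: hs_inner_def)
  also have "\<dots> = (\<Sum>a<n1. \<Sum>b<n2. \<Sum>c<m1. \<Sum>d<m2. (cnj (A $$ (a,c)) * C $$ (a,c)) * (cnj (B $$ (b,d)) * D $$ (b,d)))"
    unfolding sum_lessThan_mult_nat
  proof (intro sum.cong refl)
    fix a b c d assume a: "a \<in> {..<n1}" and b: "b \<in> {..<n2}" and c: "c \<in> {..<m1}"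
      and d: "d \<in> {..<m2}"
    have l1: "a*n2+b < n1*n2"
    proof -
      have "a*n2+b < (a+1)*n2" using b by simp
      also have "\<dots> \<le> n1*n2" using a by (intro mult_le_mono1) simp
      finally show ?thesis .
    qed
    have l2: "c*m2+d < m1*m2"
    proof -
      have "c*m2+d < (c+1)*m2" using d by simp
      also have "\<dots> \<le> m1*m2" using c by (intro mult_le_mono1) simp
      finally show ?thesis .
    qed
    have dv: "(a*n2+b) div n2 = a" "(a*n2+b) mod n2 = b" "(c*m2+d) div m2 = c" "(c*m2+d) mod m2 = d"
      using b d by auto
    show "cnj (kron A B $$ (a*n2+b, c*m2+d)) * kron C D $$ (a*n2+b, c*m2+d) =
      (cnj (A $$ (a,c)) * C $$ (a,c)) * (cnj (B $$ (b,d)) * D $$ (b,d))"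
      using A B C D l1 l2 dv by (simp add: mult_ac)
  qed
  also have "\<dots> = (\<Sum>a<n1. \<Sum>c<m1. \<Sum>b<n2. \<Sum>d<m2. (cnj (A $$ (a,c)) * C $$ (a,c)) * (cnj (B $$ (b,d)) * D $$ (b,d)))"
    by (rule sum.cong[OF refl], rule sum.swap)
  also have "\<dots> = hs_inner A C * hs_inner B D"
  proof -
    have dd: "dim_row C = n1" "dim_col C = m1" "dim_row D = n2" "dim_col D = m2" using C D by auto
    show ?thesis unfolding hs_inner_def dd
      by (unfold sum_distrib_right, unfold sum_distrib_left, rule refl)
  qed
  finally show ?thesis .
qed

lemma hs_inner_self_eq_0:
  assumes A: "A \<in> carrier_mat n m" and h: "hs_inner A A = 0"
  shows "A = 0\<^sub>m n m"
proof -
  have e: "cnj (A $$ (i,j)) * A $$ (i,j) = complex_of_real ((cmod (A $$ (i,j)))\<^sup>2)" for i j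
    by (metis complex_norm_square mult.commute of_real_power)
  have "complex_of_real (\<Sum>i<n. \<Sum>j<m. (cmod (A $$ (i,j)))\<^sup>2) = hs_inner A A"
    using A unfolding hs_inner_def by (simp add: e of_real_sum)
  hence z: "(\<Sum>i<n. \<Sum>j<m. (cmod (A $$ (i,j)))\<^sup>2) = 0" using h by (metis of_real_eq_0_iff)
  have "\<forall>i\<in>{..<n}. (\<Sum>j<m. (cmod (A $$ (i,j)))\<^sup>2) = 0"
    using z by (subst sum_nonneg_eq_0_iff[symmetric]) (auto intro: sum_nonneg)
  hence "\<forall>i<n. \<forall>j<m. (cmod (A $$ (i,j)))\<^sup>2 = 0"
    by (subst (asm) sum_nonneg_eq_0_iff) auto
  hence "\<forall>i<n. \<forall>j<m. A $$ (i,j) = 0" by auto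
  thus ?thesis using A by (intro eq_matI) auto
qed

lemma hs_inner_smult_right[simp]: "hs_inner A (c \<cdot>\<^sub>m B) = c * hs_inner A B"
  by (simp add: hs_inner_def sum_distrib_left mult_ac)

lemma hs_inner_smult_left: assumes "A \<in> carrier_mat n m" "B \<in> carrier_mat n m"
  shows "hs_inner (c \<cdot>\<^sub>m A) B = cnj c * hs_inner A B"
  using assms by (simp add: hs_inner_def sum_distrib_left mult_ac)

lemma hs_inner_zero_right[simp]: "hs_inner A (0\<^sub>m n m) = 0"
  by (simp add: hs_inner_def)

lemma msum_carrier[simp]: "msum N f I \<in> carrier_mat N N"
  by (simp add: msum_def)

lemma msum_dims[simp]: "dim_row (msum N f I) = N" "dim_col (msum N f I) = N"
  by (simp_all add: msum_def)

lemma msum_index[simp]: "i < N \<Longrightarrow> j < N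
    \<Longrightarrow> msum N f I $$ (i,j) = (\<Sum>x\<in>I. f x $$ (i,j))"
  by (simp add: msum_def)

lemma msum_eqI: "(\<And>i j. i < N \<Longrightarrow> j < N
    \<Longrightarrow> (\<Sum>x\<in>I. f x $$ (i,j)) = (\<Sum>x\<in>J. g x $$ (i,j)))
  \<Longrightarrow> msum N f I = msum N g J"
  by (rule eq_matI) auto

lemma msum_cong: "(\<And>x. x \<in> I \<Longrightarrow> f x = g x) \<Longrightarrow> msum N f I = msum N g I"
  by (rule msum_eqI) (auto intro: sum.cong)

lemma msum_empty[simp]: "msum N f {} = 0\<^sub>m N N"
  by (rule eq_matI) auto

lemma msum_add: assumes "\<And>x. x \<in> I
    \<Longrightarrow> f x \<in> carrier_mat N N" "\<And>x. x \<in> I \<Longrightarrow> g x \<in> carrier_mat N N"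
  shows "msum N f I + msum N g I = msum N (\<lambda>x. f x + g x) I"
proof (rule eq_matI)
  fix i j assume "i < dim_row (msum N (\<lambda>x. f x + g x) I)" "j < dim_col (msum N (\<lambda>x. f x + g x) I)"
  hence ij: "i < N" "j < N" by auto
  have "(\<Sum>x\<in>I. (f x + g x) $$ (i,j)) = (\<Sum>x\<in>I. f x $$ (i,j) + g x $$ (i,j))"
    using ij by (intro sum.cong refl)
      (simp add: assms(1)[THEN carrier_matD(1)] assms(1)[THEN carrier_matD(2)]
         assms(2)[THEN carrier_matD(1)] assms(2)[THEN carrier_matD(2)])
  then show "(msum N f I + msum N g I) $$ (i,j) = msum N (\<lambda>x. f x + g x) I $$ (i,j)"
    using ij by (simp add: sum.distrib)
qed auto

lemma msum_smult: assumes "\<And>x. x \<in> I \<Longrightarrow> f x \<in> carrier_mat N N"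
  shows "c \<cdot>\<^sub>m msum N f I = msum N (\<lambda>x. c \<cdot>\<^sub>m f x) I"
proof (rule eq_matI)
  fix i j assume "i < dim_row (msum N (\<lambda>x. c \<cdot>\<^sub>m f x) I)" "j < dim_col (msum N (\<lambda>x. c \<cdot>\<^sub>m f x) I)"
  hence ij: "i < N" "j < N" by auto
  have "(\<Sum>x\<in>I. (c \<cdot>\<^sub>m f x) $$ (i,j)) = (\<Sum>x\<in>I. c * f x $$ (i,j))"
    using ij by (intro sum.cong refl)
      (simp add: assms(1)[THEN carrier_matD(1)] assms(1)[THEN carrier_matD(2)])
  then show "(c \<cdot>\<^sub>m msum N f I) $$ (i,j) = msum N (\<lambda>x. c \<cdot>\<^sub>m f x) I $$ (i,j)"
    using ij by (simp add: sum_distrib_left)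
qed auto

lemma msum_insert: assumes "finite I" "x \<notin> I" "f x \<in> carrier_mat N N"
  shows "msum N f (insert x I) = f x + msum N f I"
  by (rule eq_matI) (use assms in auto)

lemma msum_zero: "(\<And>x. x \<in> I \<Longrightarrow> f x = 0\<^sub>m N N)
    \<Longrightarrow> msum N f I = 0\<^sub>m N N"
  by (rule eq_matI) auto

lemma msum_delta: assumes "finite I" "x \<in> I" "f x \<in> carrier_mat N N" "\<And>y. y \<in> I
    \<Longrightarrow> y \<noteq> x \<Longrightarrow> f y = 0\<^sub>m N N"
  shows "msum N f I = f x"
proof (rule eq_matI)
  fix i j assume "i < dim_row (f x)" "j < dim_col (f x)"
  hence ij: "i < N" "j < N" using assms by auto
  have "(\<Sum>y\<in>I. f y $$ (i,j)) = f x $$ (i,j) + (\<Sum>y\<in>I - {x}. f y $$ (i,j))"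
    using assms by (simp add: sum.remove)
  also have "(\<Sum>y\<in>I - {x}. f y $$ (i,j)) = 0"
    using assms ij by (intro sum.neutral) auto
  finally have "(\<Sum>y\<in>I. f y $$ (i,j)) = f x $$ (i,j)" by simp
  then show "msum N f I $$ (i,j) = f x $$ (i,j)" using ij by simp
qed (use assms in auto)

lemma msum_reindex: assumes "bij_betw p J I"
  shows "msum N f I = msum N (\<lambda>y. f (p y)) J"
proof (rule msum_eqI)
  fix i j show "(\<Sum>x\<in>I. f x $$ (i,j)) = (\<Sum>x\<in>J. f (p x) $$ (i,j))"
    using sum.reindex_bij_betw[OF assms, of "\<lambda>x. f x $$ (i,j)"] by simp
qed

lemma msubspace_carrier: "msubspace N W \<Longrightarrow> A \<in> W \<Longrightarrow> A \<in> carrier_mat N N"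
  by (auto simp: msubspace_def)

lemma msubspace_msum: assumes W: "msubspace N W" and "finite I" "\<And>x. x \<in> I
    \<Longrightarrow> f x \<in> W"
  shows "msum N f I \<in> W"
  using assms(2,3)
proof (induction I rule: finite_induct)
  case empty then show ?case using W by (simp add: msubspace_def)
next
  case (insert x I)
  have "f x \<in> W" using insert by auto
  hence "f x \<in> carrier_mat N N" using W msubspace_carrier by blast
  hence "msum N f (insert x I) = f x + msum N f I" using msum_insert[OF insert(1) insert(2)] by blast
  moreover have "\<forall>A\<in>W. \<forall>B\<in>W. A + B \<in> W" using W by (simp add: msubspace_def)
  moreover have "msum N f I \<in> W" using insert by simp
  ultimately show ?case using \<open>f x \<in> W\<close> by simp
qed

lemma msum_extend: assumes "finite G" "F \<subseteq> G" "G \<subseteq> carrier_mat N N"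
  shows "msum N (\<lambda>A. c A \<cdot>\<^sub>m A) F = msum N (\<lambda>A. (if A \<in> F then c A else 0) \<cdot>\<^sub>m A) G"
proof (rule msum_eqI)
  fix i j assume ij: "i < N" "j < N"
  have "(\<Sum>x\<in>G. ((if x \<in> F then c x else 0) \<cdot>\<^sub>m x) $$ (i,j)) = (\<Sum>x\<in>G. if x \<in> F then (c x \<cdot>\<^sub>m x) $$ (i,j) else 0)"
  proof (rule sum.cong[OF refl])
    fix x assume "x \<in> G"
    hence "x \<in> carrier_mat N N" using assms by auto
    then show "((if x \<in> F then c x else 0) \<cdot>\<^sub>m x) $$ (i,j) = (if x \<in> F then (c x \<cdot>\<^sub>m x) $$ (i,j) else 0)"
      using ij by auto
  qed
  also have "\<dots> = (\<Sum>x\<in>F. (c x \<cdot>\<^sub>m x) $$ (i,j))"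
    using assms by (simp add: sum.inter_restrict[symmetric] Int_absorb1)
  finally show "(\<Sum>x\<in>F. (c x \<cdot>\<^sub>m x) $$ (i,j)) = (\<Sum>x\<in>G. ((if x \<in> F then c x else 0) \<cdot>\<^sub>m x) $$ (i,j))" by simp
qed

lemma mspan_intro: "finite F \<Longrightarrow> F \<subseteq> Gs
    \<Longrightarrow> X = msum N (\<lambda>A. c A \<cdot>\<^sub>m A) F \<Longrightarrow> X \<in> mspan N Gs"
  unfolding mspan_def by blast

lemma msubspace_mspan: assumes Gs: "Gs \<subseteq> carrier_mat N N"
  shows "msubspace N (mspan N Gs)"
  unfolding msubspace_def
proof (intro conjI ballI allI)
  show "mspan N Gs \<subseteq> carrier_mat N N" unfolding mspan_def by auto
  show "0\<^sub>m N N \<in> mspan N Gs" unfolding mspan_def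
    by (rule CollectI, rule exI[of _ "\<lambda>_. 0"], rule exI[of _ "{}"]) simp
next
  fix A B assume "A \<in> mspan N Gs" "B \<in> mspan N Gs"
  then obtain c F d G where A: "A = msum N (\<lambda>A. c A \<cdot>\<^sub>m A) F" "finite F" "F \<subseteq> Gs"
    and B: "B = msum N (\<lambda>A. d A \<cdot>\<^sub>m A) G" "finite G" "G \<subseteq> Gs"
      unfolding mspan_def by blast
  let ?H = "F \<union> G"
  let ?c = "\<lambda>A. if A \<in> F then c A else 0" and ?d = "\<lambda>A. if A \<in> G then d A else 0"
  have HS: "?H \<subseteq> carrier_mat N N" using A B Gs by auto
  have "A + B = msum N (\<lambda>A. ?c A \<cdot>\<^sub>m A) ?H + msum N (\<lambda>A. ?d A \<cdot>\<^sub>m A) ?H"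
    using A B msum_extend[of ?H F N c] msum_extend[of ?H G N d] HS by auto
  also have "\<dots> = msum N (\<lambda>A. ?c A \<cdot>\<^sub>m A + ?d A \<cdot>\<^sub>m A) ?H"
    using HS by (intro msum_add) auto
  also have "\<dots> = msum N (\<lambda>A. (?c A + ?d A) \<cdot>\<^sub>m A) ?H"
    using HS by (intro msum_cong) (auto simp: add_smult_distrib_right_mat[symmetric])
  finally show "A + B \<in> mspan N Gs" using A B by (intro mspan_intro[of ?H]) auto
next
  fix k A assume "A \<in> mspan N Gs"
  then obtain c F where A: "A = msum N (\<lambda>B. c B \<cdot>\<^sub>m B) F" "finite F" "F \<subseteq> Gs" unfolding mspan_def by blast
  have FC: "\<And>B. B \<in> F \<Longrightarrow> c B \<cdot>\<^sub>m B \<in> carrier_mat N N"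
    using A(3) Gs by auto
  have "k \<cdot>\<^sub>m msum N (\<lambda>B. c B \<cdot>\<^sub>m B) F = msum N (\<lambda>B. k \<cdot>\<^sub>m (c B \<cdot>\<^sub>m B)) F"
    by (rule msum_smult[OF FC])
  hence "k \<cdot>\<^sub>m A = msum N (\<lambda>B. (k * c B) \<cdot>\<^sub>m B) F" using A(1) by simp
  then show "k \<cdot>\<^sub>m A \<in> mspan N Gs" using A by (intro mspan_intro[of F]) auto
qed

lemma mspan_superset: assumes "Gs \<subseteq> carrier_mat N N" "A \<in> Gs" shows "A \<in> mspan N Gs"
proof -
  have "A = msum N (\<lambda>B. 1 \<cdot>\<^sub>m B) {A}"
    using assms by (intro eq_matI) auto
  then show ?thesis using assms(2) by (intro mspan_intro[of "{A}" Gs A N "\<lambda>_. 1"]) auto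
qed

lemma mspan_least: assumes "msubspace N W" "Gs \<subseteq> W" shows "mspan N Gs \<subseteq> W"
proof
  fix X assume "X \<in> mspan N Gs"
  then obtain c F where X: "X = msum N (\<lambda>A. c A \<cdot>\<^sub>m A) F" "finite F" "F \<subseteq> Gs" unfolding mspan_def by blast
  show "X \<in> W" unfolding X(1)
    using assms X by (intro msubspace_msum) (auto simp: msubspace_def)
qed

lemma msubspace_dsum: assumes "\<And>i. i \<in> I \<Longrightarrow> msubspace N (W i)"
  shows "msubspace N (dsum N I W)"
  unfolding msubspace_def
proof (intro conjI ballI allI)
  show "dsum N I W \<subseteq> carrier_mat N N" unfolding dsum_def by auto
  have "0\<^sub>m N N = msum N (\<lambda>_. 0\<^sub>m N N) I" by (rule msum_zero[symmetric]) simp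
  moreover have "\<forall>i\<in>I. 0\<^sub>m N N \<in> W i" using assms by (auto simp: msubspace_def)
  ultimately show "0\<^sub>m N N \<in> dsum N I W" unfolding dsum_def by blast
next
  fix A B assume "A \<in> dsum N I W" "B \<in> dsum N I W"
  then obtain f g where A: "A = msum N f I" "\<forall>i\<in>I. f i \<in> W i"
    and B: "B = msum N g I" "\<forall>i\<in>I. g i \<in> W i"
    unfolding dsum_def by blast
  have fc: "\<And>i. i \<in> I \<Longrightarrow> f i \<in> carrier_mat N N"
    using A(2) assms msubspace_carrier by blast
  have gc: "\<And>i. i \<in> I \<Longrightarrow> g i \<in> carrier_mat N N"
    using B(2) assms msubspace_carrier by blast
  have "A + B = msum N (\<lambda>i. f i + g i) I"
    unfolding A(1) B(1) using fc gc by (rule msum_add)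
  moreover have "\<forall>i\<in>I. f i + g i \<in> W i" using A B assms by (auto simp: msubspace_def)
  ultimately show "A + B \<in> dsum N I W" unfolding dsum_def by blast
next
  fix k A assume "A \<in> dsum N I W"
  then obtain f where A: "A = msum N f I" "\<forall>i\<in>I. f i \<in> W i" unfolding dsum_def by blast
  have fc: "\<And>i. i \<in> I \<Longrightarrow> f i \<in> carrier_mat N N"
    using A(2) assms msubspace_carrier by blast
  have "k \<cdot>\<^sub>m A = msum N (\<lambda>i. k \<cdot>\<^sub>m f i) I"
    unfolding A(1) using fc by (rule msum_smult)
  moreover have "\<forall>i\<in>I. k \<cdot>\<^sub>m f i \<in> W i" using A assms
    by (auto simp: msubspace_def)
  ultimately show "k \<cdot>\<^sub>m A \<in> dsum N I W" unfolding dsum_def by blast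
qed

lemma msum_in_dsum: "(\<And>i. i \<in> I \<Longrightarrow> f i \<in> W i)
    \<Longrightarrow> msum N f I \<in> dsum N I W"
  unfolding dsum_def by blast

lemma hs_inner_msum_right: assumes "\<And>x. x \<in> I \<Longrightarrow> f x \<in> carrier_mat N N"
  shows "hs_inner A (msum N f I) = (\<Sum>x\<in>I. hs_inner A (f x))"
proof -
  have "hs_inner A (msum N f I) = (\<Sum>i<N. \<Sum>j<N. \<Sum>x\<in>I. cnj (A $$ (i,j)) * f x $$ (i,j))"
    by (simp add: hs_inner_def sum_distrib_left)
  also have "\<dots> = (\<Sum>i<N. \<Sum>x\<in>I. \<Sum>j<N. cnj (A $$ (i,j)) * f x $$ (i,j))"
    by (rule sum.cong[OF refl], rule sum.swap)
  also have "\<dots> = (\<Sum>x\<in>I. \<Sum>i<N. \<Sum>j<N. cnj (A $$ (i,j)) * f x $$ (i,j))"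
    by (rule sum.swap)
  also have "\<dots> = (\<Sum>x\<in>I. hs_inner A (f x))"
    by (intro sum.cong refl) (simp add: hs_inner_def assms[THEN carrier_matD(1)] assms[THEN carrier_matD(2)])
  finally show ?thesis .
qed

lemma hs_inner_msum_left: assumes "\<And>x. x \<in> I
    \<Longrightarrow> f x \<in> carrier_mat N N" "B \<in> carrier_mat N N"
  shows "hs_inner (msum N f I) B = (\<Sum>x\<in>I. hs_inner (f x) B)"
proof -
  have "hs_inner (msum N f I) B = (\<Sum>i<N. \<Sum>j<N. \<Sum>x\<in>I. cnj (f x $$ (i,j)) * B $$ (i,j))"
    using assms(2) by (simp add: hs_inner_def sum_distrib_right)
  also have "\<dots> = (\<Sum>i<N. \<Sum>x\<in>I. \<Sum>j<N. cnj (f x $$ (i,j)) * B $$ (i,j))"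
    by (rule sum.cong[OF refl], rule sum.swap)
  also have "\<dots> = (\<Sum>x\<in>I. \<Sum>i<N. \<Sum>j<N. cnj (f x $$ (i,j)) * B $$ (i,j))"
    by (rule sum.swap)
  also have "\<dots> = (\<Sum>x\<in>I. hs_inner (f x) B)"
    using assms(2) by (intro sum.cong refl) (simp add: hs_inner_def)
  finally show ?thesis .
qed

lemma hs_inner_mspan_right_eq_0:
  assumes G: "G \<subseteq> carrier_mat N N" and X: "X \<in> mspan N G"
    and orth: "\<And>h. h \<in> G \<Longrightarrow> hs_inner g h = 0"
  shows "hs_inner g X = 0"
proof -
  obtain c F where F: "X = msum N (\<lambda>B. c B \<cdot>\<^sub>m B) F" "finite F" "F \<subseteq> G"
    using X unfolding mspan_def by blast
  have "hs_inner g X = (\<Sum>B\<in>F. c B * hs_inner g B)"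
    unfolding F(1) using F(3) G by (subst hs_inner_msum_right) auto
  also have "\<dots> = 0" using orth F(3) by (intro sum.neutral) auto
  finally show ?thesis .
qed

lemma mspan_orthogonal_eq_0:
  assumes G: "G \<subseteq> carrier_mat N N" and X: "X \<in> mspan N G"
    and orth: "\<And>g. g \<in> G \<Longrightarrow> hs_inner g X = 0"
  shows "X = 0\<^sub>m N N"
proof -
  obtain c F where F: "X = msum N (\<lambda>B. c B \<cdot>\<^sub>m B) F" "finite F" "F \<subseteq> G"
    using X unfolding mspan_def by blast
  have FC: "\<And>B. B \<in> F \<Longrightarrow> B \<in> carrier_mat N N" using F(3) G by blast
  have XC: "X \<in> carrier_mat N N" unfolding F(1) by simp
  have "hs_inner X X = (\<Sum>B\<in>F. hs_inner (c B \<cdot>\<^sub>m B) X)"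
    by (subst (1) F(1), rule hs_inner_msum_left) (use FC XC in auto)
  also have "\<dots> = (\<Sum>B\<in>F. cnj (c B) * hs_inner B X)"
    by (intro sum.cong refl hs_inner_smult_left[OF FC XC])
  also have "\<dots> = 0" using orth F(3) by (intro sum.neutral) auto
  finally show ?thesis using hs_inner_self_eq_0[OF XC] by simp
qed

lemma is_direct_sum_orthogonal_mspans:
  assumes I: "finite I" and G: "\<And>i. i \<in> I \<Longrightarrow> G i \<subseteq> carrier_mat N N"
    and orth: "\<And>i j g h. i \<in> I \<Longrightarrow> j \<in> I \<Longrightarrow> i \<noteq> j
        \<Longrightarrow> g \<in> G i \<Longrightarrow> h \<in> G j \<Longrightarrow> hs_inner g h = 0"
  shows "is_direct_sum N (mspan N (\<Union>i\<in>I. G i)) I (\<lambda>i. mspan N (G i))"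
proof -
  let ?U = "\<Union>i\<in>I. G i" and ?D = "dsum N I (\<lambda>i. mspan N (G i))"
  have GU: "?U \<subseteq> carrier_mat N N" using G by blast
  have sub: "\<And>i. i \<in> I \<Longrightarrow> msubspace N (mspan N (G i))" using G
    by (rule msubspace_mspan)
  have "?U \<subseteq> ?D"
  proof
    fix g assume "g \<in> ?U"
    then obtain i where i: "i \<in> I" "g \<in> G i" by blast
    let ?f = "\<lambda>j. if j = i then g else 0\<^sub>m N N"
    have "msum N ?f I = g" using msum_delta[of I i ?f N] I i G by auto
    moreover have "msum N ?f I \<in> ?D"
      using i G mspan_superset sub by (intro msum_in_dsum) (auto simp: msubspace_def)
    ultimately show "g \<in> ?D" by simp
  qed
  moreover have "msubspace N ?D" by (rule msubspace_dsum) (rule sub)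
  ultimately have "mspan N ?U \<subseteq> ?D" by (intro mspan_least)
  moreover have "?D \<subseteq> mspan N ?U"
  proof
    fix X assume "X \<in> ?D"
    then obtain f where f: "X = msum N f I" "\<forall>i\<in>I. f i \<in> mspan N (G i)"
      unfolding dsum_def by blast
    have "mspan N (G i) \<subseteq> mspan N ?U" if "i \<in> I" for i
      using that GU by (intro mspan_least[OF msubspace_mspan[OF GU]]) (auto intro: mspan_superset)
    then show "X \<in> mspan N ?U"
      unfolding f(1) using f(2) by (intro msubspace_msum[OF msubspace_mspan[OF GU] I]) blast
  qed
  moreover have "f i = 0\<^sub>m N N"
    if f: "\<forall>j\<in>I. f j \<in> mspan N (G j)" "msum N f I = 0\<^sub>m N N" and i: "i \<in> I" for f i
  proof (rule mspan_orthogonal_eq_0[OF G[OF i]])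
    show "f i \<in> mspan N (G i)" using f i by blast
    fix g assume g: "g \<in> G i"
    have fc: "\<And>j. j \<in> I \<Longrightarrow> f j \<in> carrier_mat N N"
      using f sub msubspace_carrier by blast
    have orth_f: "hs_inner g (f j) = 0" if "j \<in> I - {i}" for j
    proof (rule hs_inner_mspan_right_eq_0)
      show "G j \<subseteq> carrier_mat N N" "f j \<in> mspan N (G j)" using that G f(1) by auto
      show "\<And>h. h \<in> G j \<Longrightarrow> hs_inner g h = 0" using that i g by (intro orth) auto
    qed
    have "0 = (\<Sum>j\<in>I. hs_inner g (f j))"
      using hs_inner_msum_right[of I f N g] fc f(2) by simp
    also have "\<dots> = hs_inner g (f i) + (\<Sum>j\<in>I - {i}. hs_inner g (f j))"
      using I i by (simp add: sum.remove)
    finally show "hs_inner g (f i) = 0" using orth_f by simp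
  qed
  ultimately show ?thesis unfolding is_direct_sum_def by (intro conjI subset_antisym allI impI ballI) auto
qed

lemma is_direct_sum_subspaces:
  assumes "is_direct_sum N V I U" and "\<And>i. i \<in> I \<Longrightarrow> W i \<subseteq> U i"
  shows "is_direct_sum N (dsum N I W) I W"
  using assms unfolding is_direct_sum_def by blast

section \<open>Pauli matrices and Pauli strings\<close>

lemma sum_lessThan_2: "(\<Sum>i<2. f i) = f 0 + f (1::nat)"
  by (simp add: numeral_2_eq_2)

lemma sum_atLeast0LessThan_2: "(\<Sum>i\<in>{0..<2}. f i) = f 0 + f (1::nat)"
  by (simp add: numeral_2_eq_2)

lemma eq_mat2I: assumes "A \<in> carrier_mat 2 2" "B \<in> carrier_mat 2 2"
  "A $$ (0,0) = B $$ (0,0)" "A $$ (0,1) = B $$ (0,1)" "A $$ (1,0) = B $$ (1,0)" "A $$ (1,1) = B $$ (1,1)"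
  shows "A = B"
proof (rule eq_matI)
  fix i j assume "i < dim_row B" "j < dim_col B"
  hence "i = 0 \<or> i = 1" "j = 0 \<or> j = 1" using assms by auto
  thus "A $$ (i,j) = B $$ (i,j)" using assms by auto
qed (use assms in auto)

(* Codes 0, 1, 2, 3 stand for I, X, Y, Z; then pauli1 a * pauli1 b is
   pauli1_phase a b times pauli1 (pauli1_idx a b). *)
definition pauli1 :: "nat \<Rightarrow> complex mat" where
  "pauli1 a = (if a = 1 then pX else if a = 2 then pY else if a = 3 then pZ else pI)"

definition pauli1_idx :: "nat \<Rightarrow> nat \<Rightarrow> nat" where
  "pauli1_idx a b = (if a = 0 then b else if b = 0 then a else if a = b then 0 else 6 - a - b)"

definition pauli1_phase :: "nat \<Rightarrow> nat \<Rightarrow> complex" where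
  "pauli1_phase a b = (if a = 0 \<or> b = 0 \<or> a = b then 1 else
     if (a = 1 \<and> b = 2) \<or> (a = 2 \<and> b = 3) \<or> (a = 3 \<and> b = 1) then \<i> else - \<i>)"

definition pauli1_anticomm :: "nat \<Rightarrow> nat \<Rightarrow> bool" where
  "pauli1_anticomm a b \<longleftrightarrow> a \<noteq> 0 \<and> b \<noteq> 0 \<and> a \<noteq> b"

definition pauli1_entry :: "nat \<Rightarrow> nat \<Rightarrow> nat \<Rightarrow> complex" where
  "pauli1_entry a i j = (if a = 1 then (if i \<noteq> j then 1 else 0)
     else if a = 2 then (if i = 0 \<and> j = 1 then - \<i> else if i = 1 \<and> j = 0 then \<i> else 0)
     else if a = 3 then (if i = j then (if i = 0 then 1 else -1) else 0)
     else (if i = j then 1 else 0))"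

lemma pauli1_carrier[simp]: "pauli1 a \<in> carrier_mat 2 2"
  by (simp add: pauli1_def pX_def pY_def pZ_def pI_def)

lemma dim_pauli1[simp]: "dim_row (pauli1 a) = 2" "dim_col (pauli1 a) = 2"
  using carrier_matD[OF pauli1_carrier[of a]] by auto

lemma index_pauli1[simp]: "i < 2 \<Longrightarrow> j < 2
    \<Longrightarrow> pauli1 a $$ (i,j) = pauli1_entry a i j"
  by (auto simp: pauli1_def pX_def pY_def pZ_def pI_def pauli1_entry_def)

lemma less_4_cases: "(a::nat) < 4 \<Longrightarrow> a = 0 \<or> a = 1 \<or> a = 2 \<or> a = 3"
  by auto

lemma pauli1_mult: assumes "a < 4" "b < 4"
  shows "pauli1 a * pauli1 b = pauli1_phase a b \<cdot>\<^sub>m pauli1 (pauli1_idx a b)"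
  apply (insert less_4_cases[OF assms(1)] less_4_cases[OF assms(2)])
  apply (elim disjE; rule eq_mat2I)
  apply (simp_all add: mult_carrier_mat[OF pauli1_carrier pauli1_carrier] scalar_prod_def
      sum_atLeast0LessThan_2 pauli1_entry_def pauli1_phase_def pauli1_idx_def)
  done

lemma adj_pauli1: assumes "a < 4" shows "adj (pauli1 a) = pauli1 a"
  apply (insert less_4_cases[OF assms(1)])
  apply (elim disjE; rule eq_mat2I)
  apply (simp_all add: adj_carrier2[OF pauli1_carrier] pauli1_entry_def)
  done

lemma hs_inner_pauli1: assumes "a < 4" "b < 4"
  shows "hs_inner (pauli1 a) (pauli1 b) = (if a = b then 2 else 0)"
  using less_4_cases[OF assms(1)] less_4_cases[OF assms(2)]
  by (elim disjE) (simp_all add: hs_inner_def sum_lessThan_2 pauli1_entry_def)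

definition pauli_str :: "nat list \<Rightarrow> complex mat" where "pauli_str as = kron_list (map pauli1 as)"

definition pauli_code :: "nat list \<Rightarrow> bool" where "pauli_code as \<longleftrightarrow> (\<forall>a\<in>set as. a < 4)"

lemma pauli_str_simps[simp]: "pauli_str [] = 1\<^sub>m 1" "pauli_str (a#as) = kron (pauli1 a) (pauli_str as)"
  by (simp_all add: pauli_str_def)

lemma pauli_code_simps[simp]: "pauli_code []" "pauli_code (a#as) \<longleftrightarrow> a < 4
    \<and> pauli_code as"
  by (simp_all add: pauli_code_def)

lemma pauli_str_carrier[simp]: "pauli_str as \<in> carrier_mat (2^length as) (2^length as)"
proof (induction as)
  case Nil then show ?case by simp
next
  case (Cons a as)
  then have d: "dim_row (pauli_str as) = 2^length as" "dim_col (pauli_str as) = 2^length as" by auto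
  show ?case using kron_carrier[of "pauli1 a" "pauli_str as"] unfolding d by simp
qed

lemma dim_pauli_str[simp]: "dim_row (pauli_str as) = 2^length as" "dim_col (pauli_str as) = 2^length as"
  using carrier_matD[OF pauli_str_carrier[of as]] by auto

fun str_phase :: "nat list \<Rightarrow> nat list \<Rightarrow> complex" where
  "str_phase (a#as) (b#bs) = pauli1_phase a b * str_phase as bs" | "str_phase _ _ = 1"

fun str_idx :: "nat list \<Rightarrow> nat list \<Rightarrow> nat list" where
  "str_idx (a#as) (b#bs) = pauli1_idx a b # str_idx as bs" | "str_idx _ _ = []"

fun str_anticomm :: "nat list \<Rightarrow> nat list \<Rightarrow> bool" where
  "str_anticomm (a#as) (b#bs) = (pauli1_anticomm a b \<noteq> str_anticomm as bs)" | "str_anticomm _ _ = False"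

lemma length_str_idx[simp]: "length as = length bs \<Longrightarrow> length (str_idx as bs) = length as"
  by (induction as bs rule: list_induct2) auto

lemma pauli1_idx_less_4: "a < 4 \<Longrightarrow> b < 4 \<Longrightarrow> pauli1_idx a b < 4"
  by (auto simp: pauli1_idx_def)

lemma pauli_code_str_idx: "length as = length bs \<Longrightarrow> pauli_code as
    \<Longrightarrow> pauli_code bs \<Longrightarrow> pauli_code (str_idx as bs)"
  by (induction as bs rule: list_induct2) (auto simp: pauli1_idx_less_4)

lemma pauli_str_mult: "length as = length bs \<Longrightarrow> pauli_code as
    \<Longrightarrow> pauli_code bs \<Longrightarrow>
   pauli_str as * pauli_str bs = str_phase as bs \<cdot>\<^sub>m pauli_str (str_idx as bs)"
proof (induction as bs rule: list_induct2)
  case Nil then show ?case by simp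
next
  case (Cons a as b bs)
  have Sb: "pauli_str bs \<in> carrier_mat (2^length as) (2^length as)"
    using Cons.hyps pauli_str_carrier[of bs] by simp
  have "pauli_str (a#as) * pauli_str (b#bs) = kron (pauli1 a * pauli1 b) (pauli_str as * pauli_str bs)"
    by (simp add: kron_mult[OF pauli1_carrier pauli_str_carrier pauli1_carrier Sb])
  also have "\<dots> = kron (pauli1_phase a b \<cdot>\<^sub>m pauli1 (pauli1_idx a b)) (str_phase as bs \<cdot>\<^sub>m pauli_str (str_idx as bs))"
    using Cons by (simp add: pauli1_mult)
  also have "\<dots> = str_phase (a#as) (b#bs) \<cdot>\<^sub>m pauli_str (str_idx (a#as) (b#bs))"
    by (simp add: mult.commute)
  finally show ?case .
qed

lemma pauli1_idx_same[simp]: "pauli1_idx a a = 0" by (simp add: pauli1_idx_def)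

lemma pauli1_phase_same[simp]: "pauli1_phase a a = 1" by (simp add: pauli1_phase_def)

lemma str_idx_same: "str_idx as as = replicate (length as) 0"
  by (induction as) auto

lemma str_phase_same: "str_phase as as = 1"
  by (induction as) auto

lemma pauli_str_replicate_0: "pauli_str (replicate n 0) = 1\<^sub>m (2^n)"
proof (induction n)
  case 0 then show ?case by simp
next
  case (Suc n)
  have "pauli1 0 = 1\<^sub>m 2" by (simp add: pauli1_def pI_def)
  then show ?case using Suc by (simp add: kron_one)
qed

lemma pauli_str_square: "pauli_code as
    \<Longrightarrow> pauli_str as * pauli_str as = 1\<^sub>m (2^length as)"
  using pauli_str_mult[of as as] by (simp add: str_idx_same str_phase_same pauli_str_replicate_0)

lemma adj_pauli_str: "pauli_code as \<Longrightarrow> adj (pauli_str as) = pauli_str as"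
  by (induction as) (auto simp: adj_kron adj_pauli1)

lemma hs_inner_pauli_str: "length as = length bs \<Longrightarrow> pauli_code as
    \<Longrightarrow> pauli_code bs \<Longrightarrow>
  hs_inner (pauli_str as) (pauli_str bs) = (if as = bs then 2 ^ length as else 0)"
proof (induction as bs rule: list_induct2)
  case Nil then show ?case by (simp add: hs_inner_def)
next
  case (Cons a as b bs)
  have Sb: "pauli_str bs \<in> carrier_mat (2^length as) (2^length as)"
    using Cons.hyps pauli_str_carrier[of bs] by simp
  have "hs_inner (pauli_str (a#as)) (pauli_str (b#bs)) = hs_inner (pauli1 a) (pauli1 b) * hs_inner (pauli_str as) (pauli_str bs)"
    by (simp add: hs_inner_kron[OF pauli1_carrier pauli_str_carrier pauli1_carrier Sb])
  then show ?case using Cons by (simp add: hs_inner_pauli1)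
qed

lemma pauli1_idx_eq_0_iff: "a < 4 \<Longrightarrow> b < 4
    \<Longrightarrow> pauli1_idx a b = 0 \<longleftrightarrow> a = b"
  using less_4_cases[of a] less_4_cases[of b] by (auto simp: pauli1_idx_def)

definition nonidentity_code :: "nat list \<Rightarrow> bool" where "nonidentity_code as \<longleftrightarrow> (\<exists>a\<in>set as. a \<noteq> 0)"

lemma nonidentity_code_str_idx: "length as = length bs \<Longrightarrow> pauli_code as
    \<Longrightarrow> pauli_code bs \<Longrightarrow> nonidentity_code (str_idx as bs) \<longleftrightarrow> as \<noteq> bs"
  by (induction as bs rule: list_induct2) (auto simp: nonidentity_code_def pauli1_idx_eq_0_iff)

lemma nonidentity_code_iff: "nonidentity_code as \<longleftrightarrow> as \<noteq> replicate (length as) 0"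
  by (induction as) (auto simp: nonidentity_code_def)

lemma pauli1_phase_swap: "a < 4 \<Longrightarrow> b < 4
    \<Longrightarrow> pauli1_phase a b = (if pauli1_anticomm a b then -1 else 1) * pauli1_phase b a"
  using less_4_cases[of a] less_4_cases[of b] by (auto simp: pauli1_phase_def pauli1_anticomm_def)

lemma pauli1_idx_commute: "pauli1_idx a b = pauli1_idx b a"
  by (auto simp: pauli1_idx_def)

lemma pauli1_anticomm_commute: "pauli1_anticomm a b = pauli1_anticomm b a"
  by (auto simp: pauli1_anticomm_def)

lemma str_phase_swap: "length as = length bs \<Longrightarrow> pauli_code as
    \<Longrightarrow> pauli_code bs \<Longrightarrow> str_phase as bs = (if str_anticomm as bs then -1 else 1) * str_phase bs as"
proof (induction as bs rule: list_induct2)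
  case (Cons a as b bs)
  have "str_phase (a#as) (b#bs) = ((if pauli1_anticomm a b then -1 else 1) * pauli1_phase b a) * ((if str_anticomm as bs then -1 else 1) * str_phase bs as)"
    using Cons by (simp only: str_phase.simps pauli_code_simps, subst pauli1_phase_swap, auto)
  then show ?case by auto
qed simp

lemma str_idx_commute: "length as = length bs \<Longrightarrow> str_idx as bs = str_idx bs as"
  by (induction as bs rule: list_induct2) (auto simp: pauli1_idx_commute)

lemma str_anticomm_commute: "length as = length bs \<Longrightarrow> str_anticomm as bs = str_anticomm bs as"
  by (induction as bs rule: list_induct2) (auto simp: pauli1_anticomm_commute)

lemma pauli_str_commute: "length as = length bs \<Longrightarrow> pauli_code as
    \<Longrightarrow> pauli_code bs \<Longrightarrow>
  pauli_str as * pauli_str bs = (if str_anticomm as bs then -1 else 1) \<cdot>\<^sub>m (pauli_str bs * pauli_str as)"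
  by (simp add: pauli_str_mult str_phase_swap[of as bs] str_idx_commute[of as bs] length_str_idx)

lemma pauli1_phase_i_power: "\<exists>k. pauli1_phase a b = \<i> ^ k"
proof -
  have "pauli1_phase a b = 1 \<or> pauli1_phase a b = \<i> \<or> pauli1_phase a b = - \<i>"
    by (auto simp: pauli1_phase_def)
  then show ?thesis
  proof (elim disjE)
    assume "pauli1_phase a b = 1" then show ?thesis by (intro exI[of _ 0]) simp
  next
    assume "pauli1_phase a b = \<i>" then show ?thesis by (intro exI[of _ 1]) simp
  next
    assume "pauli1_phase a b = - \<i>" then show ?thesis by (intro exI[of _ 3]) (simp add: eval_nat_numeral)
  qed
qed

lemma str_phase_i_power: "\<exists>k. str_phase as bs = \<i> ^ k"
proof (induction as bs rule: str_phase.induct)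
  case (1 a as b bs)
  obtain k where "pauli1_phase a b = \<i>^k" using pauli1_phase_i_power by blast
  moreover obtain l where "str_phase as bs = \<i>^l" using 1 by blast
  ultimately have "str_phase (a#as) (b#bs) = \<i>^(k+l)" by (simp add: power_add)
  then show ?case by blast
qed (auto intro: exI[of _ 0])

lemma anticomm_pattern_split:
  fixes A B D NA NB DD e e' :: bool
  assumes "\<not>D \<longrightarrow> (A = B)" "\<not>A \<and> \<not>B
      \<longrightarrow> \<not>D" "\<not>DD \<longrightarrow> (NA = NB)" "\<not>NA \<and> \<not>NB \<longrightarrow> \<not>DD"
    "e \<longrightarrow> A \<or> NA" "e' \<longrightarrow> B \<or> NB" "e \<noteq> e'
        \<longrightarrow> D \<or> DD"
  shows "\<exists>f f'. (f \<longrightarrow> NA) \<and> (f' \<longrightarrow> NB)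
      \<and> (f \<noteq> f' \<longrightarrow> DD) \<and> ((e\<noteq>f) \<longrightarrow> A) \<and> ((e'\<noteq>f') \<longrightarrow> B) \<and> ((e\<noteq>f)\<noteq>(e'\<noteq>f') \<longrightarrow> D)"
  using assms by (cases e; cases e'; cases A; cases B; cases NA; cases NB) (simp_all, blast+)

lemma exists_pauli1_anticomm_pattern:
  assumes "a < 4" "b < 4" "h \<longrightarrow> a \<noteq> 0" "h'
      \<longrightarrow> b \<noteq> 0" "h \<noteq> h' \<longrightarrow> a \<noteq> b"
  shows "\<exists>r<4. pauli1_anticomm a r = h \<and> pauli1_anticomm b r = h'"
proof -
  have "\<exists>r\<in>{0,1,2,3::nat}. pauli1_anticomm a r = h \<and> pauli1_anticomm b r = h'"
    apply (insert less_4_cases[OF assms(1)] less_4_cases[OF assms(2)] assms(3-5))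
    apply (elim disjE; cases h; cases h'; auto simp: pauli1_anticomm_def)
    done
  then obtain r where "r \<in> {0,1,2,3::nat}" "pauli1_anticomm a r = h
      \<and> pauli1_anticomm b r = h'" by blast
  then show ?thesis by (intro exI[of _ r]) auto
qed

(* Any anticommutation pattern with two strings is realised unless the strings forbid it.
   By induction: anticomm_pattern_split splits the wanted parities between head and tail. *)
lemma exists_code_anticomm_pattern: "length as = length bs \<Longrightarrow> pauli_code as
    \<Longrightarrow> pauli_code bs \<Longrightarrow> (e \<longrightarrow> nonidentity_code as) \<Longrightarrow> (e' \<longrightarrow> nonidentity_code bs) \<Longrightarrow>
  (e \<noteq> e' \<longrightarrow> as \<noteq> bs) \<Longrightarrow> \<exists>rs. length rs = length as \<and> pauli_code rs \<and> str_anticomm as rs = e \<and> str_anticomm bs rs = e'"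
proof (induction as bs arbitrary: e e' rule: list_induct2)
  case Nil
  then have "\<not> e" "\<not> e'" by (auto simp: nonidentity_code_def)
  then show ?case by (intro exI[of _ "[]"]) simp
next
  case (Cons a as b bs)
  have h4: "\<not> nonidentity_code as \<and> \<not> nonidentity_code bs \<longrightarrow> as = bs"
    using Cons.hyps nonidentity_code_iff[of as] nonidentity_code_iff[of bs] by auto
  have nzc: "nonidentity_code (a#as) = (a \<noteq> 0 \<or> nonidentity_code as)" "nonidentity_code (b#bs) = (b \<noteq> 0 \<or> nonidentity_code bs)" by (auto simp: nonidentity_code_def)
  have b1: "\<not>(a\<noteq>b) \<longrightarrow> ((a\<noteq>0) = (b\<noteq>0))" by simp
  have b2: "\<not>(a\<noteq>0) \<and> \<not>(b\<noteq>0) \<longrightarrow> \<not>(a\<noteq>b)" by simp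
  have b3: "\<not>(as\<noteq>bs) \<longrightarrow> (nonidentity_code as = nonidentity_code bs)" by simp
  have b4: "\<not>nonidentity_code as \<and> \<not>nonidentity_code bs \<longrightarrow> \<not>(as\<noteq>bs)"
    using h4 by simp
  have b5: "e \<longrightarrow> a\<noteq>0 \<or> nonidentity_code as" using Cons.prems(3) nzc by simp
  have b6: "e' \<longrightarrow> b\<noteq>0 \<or> nonidentity_code bs" using Cons.prems(4) nzc by simp
  have b7: "e \<noteq> e' \<longrightarrow> a\<noteq>b \<or> as\<noteq>bs" using Cons.prems(5) by auto
  obtain f f' where ff: "(f \<longrightarrow> nonidentity_code as) \<and> (f'
      \<longrightarrow> nonidentity_code bs) \<and> (f \<noteq> f' \<longrightarrow> as \<noteq> bs) \<and> ((e\<noteq>f) \<longrightarrow> a \<noteq> 0) \<and>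
     ((e'\<noteq>f') \<longrightarrow> b \<noteq> 0) \<and> ((e\<noteq>f)\<noteq>(e'\<noteq>f') \<longrightarrow> a \<noteq> b)"
    using anticomm_pattern_split[OF b1 b2 b3 b4 b5 b6 b7] by blast
  have "\<exists>rs. length rs = length as \<and> pauli_code rs \<and> str_anticomm as rs = f
      \<and> str_anticomm bs rs = f'"
    using Cons.IH[of f f'] Cons.prems ff by simp
  then obtain rs where rs: "length rs = length as" "pauli_code rs" "str_anticomm as rs = f" "str_anticomm bs rs = f'"
    by blast
  have "\<exists>r<4. pauli1_anticomm a r = (e \<noteq> f) \<and> pauli1_anticomm b r = (e' \<noteq> f')"
    using exists_pauli1_anticomm_pattern[of a b "e \<noteq> f" "e' \<noteq> f'"] Cons.prems ff by simp
  then obtain r where r: "r < 4" "pauli1_anticomm a r = (e \<noteq> f)" "pauli1_anticomm b r = (e' \<noteq> f')"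
    by blast
  show ?case using rs r by (intro exI[of _ "r # rs"]) auto
qed

definition phased_strs :: "nat \<Rightarrow> complex mat set" where
  "phased_strs q = {\<i>^k \<cdot>\<^sub>m pauli_str as | k as. length as = q \<and> pauli_code as}"

lemma pauli1_group_carrier: "A \<in> pauli1_group \<Longrightarrow> A \<in> carrier_mat 2 2"
  by (induction rule: pauli1_group.induct) (auto simp: pX_def pZ_def)

lemma pauli1_1: "pauli1 1 = pX" unfolding pauli1_def by simp

lemma pauli1_Suc_0: "pauli1 (Suc 0) = pX" unfolding pauli1_def by simp

lemma pauli1_3: "pauli1 3 = pZ" unfolding pauli1_def by simp

lemma pauli1_0: "pauli1 0 = 1\<^sub>m 2" unfolding pauli1_def pI_def by simp

lemma pauli1_group_elem: "A \<in> pauli1_group \<Longrightarrow> \<exists>k a. a < 4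
    \<and> A = \<i>^k \<cdot>\<^sub>m pauli1 a"
proof (induction rule: pauli1_group.induct)
  case gen_X show ?case by (rule exI[of _ 0], rule exI[of _ 1]) (simp add: pauli1_1 pauli1_Suc_0)
next
  case gen_Z show ?case by (rule exI[of _ 0], rule exI[of _ 3]) (simp add: pauli1_3)
next
  case gen_i show ?case by (rule exI[of _ 1], rule exI[of _ 0]) (simp add: pauli1_0)
next
  case (mult A B)
  obtain k a where ka: "a < 4" "A = \<i>^k \<cdot>\<^sub>m pauli1 a" using mult by blast
  obtain l b where lb: "b < 4" "B = \<i>^l \<cdot>\<^sub>m pauli1 b" using mult by blast
  obtain m where m: "pauli1_phase a b = \<i>^m" using pauli1_phase_i_power by blast
  have "A * B = \<i>^(k+l+m) \<cdot>\<^sub>m pauli1 (pauli1_idx a b)"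
    using ka lb m by (simp add: pauli1_mult power_add mult_ac)
  then show ?case using pauli1_idx_less_4[OF ka(1) lb(1)] by blast
qed

lemma pauli1_in_pauli1_group: assumes "a < 4" shows "pauli1 a \<in> pauli1_group"
proof -
  have X: "pX \<in> pauli1_group" and Z: "pZ \<in> pauli1_group"
    and I: "\<i> \<cdot>\<^sub>m 1\<^sub>m 2 \<in> pauli1_group"
    by (rule pauli1_group.intros)+
  have "pauli1 0 = pauli1 1 * pauli1 1" using pauli1_mult[of 1 1]
    by (simp add: pauli1_idx_def pauli1_phase_def)
  hence "pauli1 0 = pX * pX" by (simp add: pauli1_Suc_0)
  hence p0: "pauli1 0 \<in> pauli1_group" using X by (simp add: pauli1_group.mult)
  have "(\<i> \<cdot>\<^sub>m 1\<^sub>m 2) * (pauli1 1 * pauli1 3) = pauli1 2"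
    using pauli1_mult[of 1 3] by (simp add: pauli1_idx_def pauli1_phase_def)
  hence p2: "pauli1 2 \<in> pauli1_group" using X Z I by (metis pauli1_1 pauli1_3 pauli1_group.mult)
  show ?thesis using less_4_cases[OF assms] p0 p2 X Z by (auto simp: pauli1_1 pauli1_Suc_0 pauli1_3)
qed

lemma i_power_smult_in_pauli1_group: assumes "A \<in> pauli1_group"
  shows "\<i>^k \<cdot>\<^sub>m A \<in> pauli1_group"
proof (induction k)
  case 0 then show ?case using assms by simp
next
  case (Suc k)
  have c: "\<i>^k \<cdot>\<^sub>m A \<in> carrier_mat 2 2" using pauli1_group_carrier[OF assms] by simp
  have "(\<i> \<cdot>\<^sub>m 1\<^sub>m 2) * (\<i>^k \<cdot>\<^sub>m A) = \<i> \<cdot>\<^sub>m (1\<^sub>m 2 * (\<i>^k \<cdot>\<^sub>m A))"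
    by (rule mult_smult_assoc_mat[OF one_carrier_mat c])
  also have "\<dots> = \<i>^(Suc k) \<cdot>\<^sub>m A" using c pauli1_group_carrier[OF assms] by simp
  finally have "(\<i> \<cdot>\<^sub>m 1\<^sub>m 2) * (\<i>^k \<cdot>\<^sub>m A) = \<i>^(Suc k) \<cdot>\<^sub>m A" .
  then show ?case using Suc pauli1_group.mult[OF pauli1_group.gen_i] by metis
qed

lemma kron_list_pauli1_group: "set Ps \<subseteq> pauli1_group
    \<Longrightarrow> \<exists>k as. length as = length Ps \<and> pauli_code as \<and> kron_list Ps = \<i>^k \<cdot>\<^sub>m pauli_str as"
proof (induction Ps)
  case Nil then show ?case by (intro exI[of _ 0] exI[of _ "[]"]) simp
next
  case (Cons P Ps)
  have "P \<in> pauli1_group" using Cons.prems by simp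
  then obtain j a where ja: "a < 4" "P = \<i>^j \<cdot>\<^sub>m pauli1 a" using pauli1_group_elem by blast
  obtain k as where kas: "length as = length Ps" "pauli_code as" "kron_list Ps = \<i>^k \<cdot>\<^sub>m pauli_str as"
    using Cons by auto
  have "kron_list (P # Ps) = \<i>^(j+k) \<cdot>\<^sub>m pauli_str (a # as)" using ja kas
    by (simp add: power_add mult.commute)
  then show ?case using ja kas by (intro exI[of _ "j+k"] exI[of _ "a#as"]) auto
qed

lemma pauli_group_eq_phased_strs: assumes "q \<ge> 1" shows "pauli_group q = phased_strs q"
proof
  show "pauli_group q \<subseteq> phased_strs q"
  proof
    fix M assume "M \<in> pauli_group q"
    then obtain Ps where Ps: "M = kron_list Ps" "length Ps = q" "set Ps \<subseteq> pauli1_group"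
      unfolding pauli_group_def by blast
    obtain k as where "length as = length Ps" "pauli_code as" "kron_list Ps = \<i>^k \<cdot>\<^sub>m pauli_str as"
      using kron_list_pauli1_group[OF Ps(3)] by blast
    then show "M \<in> phased_strs q" unfolding phased_strs_def using Ps by auto
  qed
  show "phased_strs q \<subseteq> pauli_group q"
  proof
    fix M assume "M \<in> phased_strs q"
    then obtain k as where M: "M = \<i>^k \<cdot>\<^sub>m pauli_str as" "length as = q" "pauli_code as" unfolding phased_strs_def by auto
    then obtain a as' where as: "as = a # as'" using assms by (cases as) auto
    have "M = kron_list ((\<i>^k \<cdot>\<^sub>m pauli1 a) # map pauli1 as')" using M as
      by (simp add: pauli_str_def)
    moreover have "set ((\<i>^k \<cdot>\<^sub>m pauli1 a) # map pauli1 as') \<subseteq> pauli1_group"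
      using M as by (auto intro!: i_power_smult_in_pauli1_group pauli1_in_pauli1_group simp: pauli_code_def)
    moreover have "length ((\<i>^k \<cdot>\<^sub>m pauli1 a) # map pauli1 as') = q" using M as by simp
    ultimately have "\<exists>Ps. M = kron_list Ps \<and> length Ps = q
        \<and> set Ps \<subseteq> pauli1_group" by blast
    then show "M \<in> pauli_group q" unfolding pauli_group_def by simp
  qed
qed

definition pauli_norm :: "nat \<Rightarrow> complex" where "pauli_norm q = complex_of_real (1 / sqrt (2 ^ q))"

lemma pauli_list_as_codes: "set Ps \<subseteq> {pI, pX, pY, pZ}
    \<Longrightarrow> \<exists>as. Ps = map pauli1 as \<and> pauli_code as"
proof (induction Ps)
  case Nil then show ?case by simp
next
  case (Cons P Ps)
  obtain as where as: "Ps = map pauli1 as" "pauli_code as" using Cons by auto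
  have "P \<in> {pI, pX, pY, pZ}" using Cons.prems by simp
  moreover have "pauli1 0 = pI" "pauli1 1 = pX" "pauli1 2 = pY" "pauli1 3 = pZ" by (simp_all add: pauli1_def)
  ultimately have "P = pauli1 0 \<or> P = pauli1 1 \<or> P = pauli1 2 \<or> P = pauli1 3" by auto
  moreover have "0 < (4::nat)" "1 < (4::nat)" "2 < (4::nat)" "3 < (4::nat)" by simp_all
  ultimately obtain a where "a < 4" "P = pauli1 a" by blast
  then show ?case using as by (intro exI[of _ "a#as"]) auto
qed

lemma set_map_pauli1: "pauli_code as \<Longrightarrow> set (map pauli1 as) \<subseteq> {pI, pX, pY, pZ}"
  by (induction as) (auto simp: pauli1_def)

lemma pauli_str_eq_one_iff: "pauli_code as
    \<Longrightarrow> pauli_str as = 1\<^sub>m (2 ^ length as) \<longleftrightarrow> \<not> nonidentity_code as"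
proof
  assume v: "pauli_code as" and e: "pauli_str as = 1\<^sub>m (2 ^ length as)"
  show "\<not> nonidentity_code as"
  proof
    assume n: "nonidentity_code as"
    have "as \<noteq> replicate (length as) 0" using n nonidentity_code_iff by auto
    hence "hs_inner (pauli_str as) (pauli_str (replicate (length as) 0)) = 0"
      using hs_inner_pauli_str[of as "replicate (length as) 0"] v by (simp add: pauli_code_def)
    moreover have "hs_inner (pauli_str as) (pauli_str as) = 2 ^ length as"
      using hs_inner_pauli_str[of as as] v by simp
    ultimately show False using e pauli_str_replicate_0[of "length as"] by simp
  qed
next
  assume "pauli_code as" "\<not> nonidentity_code as"
  then show "pauli_str as = 1\<^sub>m (2 ^ length as)" using nonidentity_code_iff pauli_str_replicate_0 by metis
qed

lemma pauli_hat_eq: "pauli_hat q = {pauli_str as | as. length as = q \<and> pauli_code as}"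
proof
  show "pauli_hat q \<subseteq> {pauli_str as | as. length as = q \<and> pauli_code as}"
  proof
    fix M assume "M \<in> pauli_hat q"
    then obtain Ps where Ps: "M = kron_list Ps" "length Ps = q" "set Ps \<subseteq> {pI, pX, pY, pZ}"
      unfolding pauli_hat_def by blast
    obtain as where "Ps = map pauli1 as" "pauli_code as" using pauli_list_as_codes[OF Ps(3)] by blast
    then show "M \<in> {pauli_str as | as. length as = q \<and> pauli_code as}" using Ps
      by (auto simp: pauli_str_def)
  qed
  show "{pauli_str as | as. length as = q \<and> pauli_code as} \<subseteq> pauli_hat q"
  proof
    fix M assume "M \<in> {pauli_str as | as. length as = q \<and> pauli_code as}"
    then obtain as where as: "M = pauli_str as" "length as = q" "pauli_code as" by blast
    hence "M = kron_list (map pauli1 as) \<and> length (map pauli1 as) = q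
        \<and> set (map pauli1 as) \<subseteq> {pI, pX, pY, pZ}"
      using set_map_pauli1 by (simp add: pauli_str_def)
    then show "M \<in> pauli_hat q" unfolding pauli_hat_def by blast
  qed
qed

lemma sigma_eq: "sigma q = {pauli_norm q \<cdot>\<^sub>m pauli_str as | as. length as = q
    \<and> pauli_code as \<and> nonidentity_code as}"
proof
  show "sigma q \<subseteq> {pauli_norm q \<cdot>\<^sub>m pauli_str as | as. length as = q
      \<and> pauli_code as \<and> nonidentity_code as}"
  proof
    fix M assume "M \<in> sigma q"
    then obtain P where P: "M = pauli_norm q \<cdot>\<^sub>m P" "P \<in> pauli_hat q" "P \<noteq> 1\<^sub>m (2^q)"
      unfolding sigma_def pauli_norm_def by blast
    then obtain as where as: "P = pauli_str as" "length as = q" "pauli_code as"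
      unfolding pauli_hat_eq by blast
    hence "nonidentity_code as" using P(3) pauli_str_eq_one_iff by blast
    then show "M \<in> {pauli_norm q \<cdot>\<^sub>m pauli_str as | as. length as = q
        \<and> pauli_code as \<and> nonidentity_code as}" using as P by blast
  qed
  show "{pauli_norm q \<cdot>\<^sub>m pauli_str as | as. length as = q \<and> pauli_code as
      \<and> nonidentity_code as} \<subseteq> sigma q"
  proof
    fix M assume "M \<in> {pauli_norm q \<cdot>\<^sub>m pauli_str as | as. length as = q
        \<and> pauli_code as \<and> nonidentity_code as}"
    then obtain as where as: "M = pauli_norm q \<cdot>\<^sub>m pauli_str as" "length as = q" "pauli_code as" "nonidentity_code as" by blast
    hence "pauli_str as \<in> pauli_hat q" "pauli_str as \<noteq> 1\<^sub>m (2^q)"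
      using pauli_str_eq_one_iff unfolding pauli_hat_eq by auto
    then show "M \<in> sigma q" unfolding sigma_def pauli_norm_def using as(1)
      unfolding pauli_norm_def by blast
  qed
qed

lemma cnj_pauli_norm[simp]: "cnj (pauli_norm q) = pauli_norm q"
  by (simp add: pauli_norm_def)

lemma pauli_norm_square: "pauli_norm q * pauli_norm q * 2 ^ q = 1"
proof -
  have s: "sqrt (2 ^ q) * sqrt (2 ^ q) = (2 ^ q :: real)" by (rule real_sqrt_mult_self[THEN trans]) simp
  have "1 / sqrt (2 ^ q) * (1 / sqrt (2 ^ q)) * 2 ^ q = (2 ^ q) / (sqrt (2 ^ q) * sqrt (2 ^ q) :: real)" by simp
  also have "\<dots> = 1" unfolding s by simp
  finally have r: "1 / sqrt (2 ^ q) * (1 / sqrt (2 ^ q)) * 2 ^ q = (1::real)" .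
  have "pauli_norm q * pauli_norm q * 2 ^ q = complex_of_real (1 / sqrt (2 ^ q) * (1 / sqrt (2 ^ q)) * 2 ^ q)"
    unfolding pauli_norm_def by (simp only: of_real_mult of_real_power of_real_numeral)
  also have "\<dots> = 1" unfolding r by simp
  finally show ?thesis .
qed

lemma pauli_norm_nonzero[simp]: "pauli_norm q \<noteq> 0"
  using pauli_norm_square[of q] by auto

lemma sigma_as_pauli_str: "\<tau> \<in> sigma q
    \<Longrightarrow> \<exists>as. \<tau> = pauli_norm q \<cdot>\<^sub>m pauli_str as \<and> length as = q \<and> pauli_code as \<and> nonidentity_code as"
  unfolding sigma_eq by blast

lemma sigma_carrier: "\<tau> \<in> sigma q \<Longrightarrow> \<tau> \<in> carrier_mat (2^q) (2^q)"
  using sigma_as_pauli_str[of \<tau> q] smult_carrier_mat pauli_str_carrier by metis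

lemma finite_sigma: "finite (sigma q)"
proof -
  have "finite {as. set as \<subseteq> {..<4::nat} \<and> length as = q}"
    by (rule finite_lists_length_eq) simp
  moreover have "{as. length as = q \<and> pauli_code as
      \<and> nonidentity_code as} \<subseteq> {as. set as \<subseteq> {..<4::nat} \<and> length as = q}"
    by (auto simp: pauli_code_def)
  ultimately have "finite {as. length as = q \<and> pauli_code as \<and> nonidentity_code as}"
    by (rule finite_subset[rotated])
  hence "finite ((\<lambda>as. pauli_norm q \<cdot>\<^sub>m pauli_str as) ` {as. length as = q
      \<and> pauli_code as \<and> nonidentity_code as})" by simp
  moreover have "sigma q = (\<lambda>as. pauli_norm q \<cdot>\<^sub>m pauli_str as) ` {as. length as = q \<and> pauli_code as \<and> nonidentity_code as}"
    unfolding sigma_eq by auto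
  ultimately show ?thesis by simp
qed

lemma hs_inner_normalized_pauli_str: assumes "length as = q" "length bs = q" "pauli_code as" "pauli_code bs"
  shows "hs_inner (pauli_norm q \<cdot>\<^sub>m pauli_str as) (pauli_norm q \<cdot>\<^sub>m pauli_str bs) = (if as = bs then 1 else 0)"
proof -
  have "hs_inner (pauli_norm q \<cdot>\<^sub>m pauli_str as) (pauli_norm q \<cdot>\<^sub>m pauli_str bs) = pauli_norm q * pauli_norm q * hs_inner (pauli_str as) (pauli_str bs)"
  proof -
    have ca: "pauli_str as \<in> carrier_mat (2^q) (2^q)" "pauli_str bs \<in> carrier_mat (2^q) (2^q)"
      using pauli_str_carrier[of as] pauli_str_carrier[of bs] assms by simp_all
    show ?thesis using hs_inner_smult_left[OF ca, of "pauli_norm q"] by (simp add: mult_ac)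
  qed
  also have "\<dots> = (if as = bs then 1 else 0)"
    using hs_inner_pauli_str[of as bs] assms pauli_norm_square[of q] by simp
  finally show ?thesis .
qed

lemma hs_inner_sigma: assumes "\<tau> \<in> sigma q" "\<tau>' \<in> sigma q"
  shows "hs_inner \<tau> \<tau>' = (if \<tau> = \<tau>' then 1 else 0)"
proof -
  obtain as where a: "\<tau> = pauli_norm q \<cdot>\<^sub>m pauli_str as" "length as = q" "pauli_code as" using sigma_as_pauli_str[OF assms(1)] by blast
  obtain bs where b: "\<tau>' = pauli_norm q \<cdot>\<^sub>m pauli_str bs" "length bs = q" "pauli_code bs" using sigma_as_pauli_str[OF assms(2)] by blast
  have h: "hs_inner \<tau> \<tau>' = (if as = bs then 1 else 0)"
    using a b hs_inner_normalized_pauli_str by simp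
  have "hs_inner \<tau>' \<tau>' = 1" using b hs_inner_normalized_pauli_str by simp
  then show ?thesis using h a b by auto
qed

lemma sigma_smult_eq:
  assumes "\<tau> \<in> sigma q" "\<tau>' \<in> sigma q" "\<tau> = a \<cdot>\<^sub>m \<tau>'"
  shows "\<tau> = \<tau>' \<and> a = 1"
proof -
  have "hs_inner \<tau>' \<tau> = a * hs_inner \<tau>' \<tau>'" using assms(3) by simp
  hence e: "hs_inner \<tau>' \<tau> = a" using hs_inner_sigma[OF assms(2) assms(2)] by simp
  show ?thesis
  proof (cases "\<tau> = \<tau>'")
    case True then show ?thesis using e hs_inner_sigma[OF assms(2) assms(2)] by simp
  next
    case False
    hence "a = 0" using e hs_inner_sigma[OF assms(2) assms(1)] by auto
    hence "hs_inner \<tau> \<tau> = 0" using assms(3) by simp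
    then show ?thesis using hs_inner_sigma[OF assms(1) assms(1)] by simp
  qed
qed

lemma sigma_mult: assumes "s \<in> sigma q" "s' \<in> sigma q"
  shows "\<exists>as bs. s * s' = (pauli_norm q * str_phase as bs) \<cdot>\<^sub>m (pauli_norm q \<cdot>\<^sub>m pauli_str (str_idx as bs)) \<and> s = pauli_norm q \<cdot>\<^sub>m pauli_str as \<and> s' = pauli_norm q \<cdot>\<^sub>m pauli_str bs
     \<and> length as = q \<and> length bs = q \<and> pauli_code as \<and> pauli_code bs \<and> nonidentity_code as \<and> nonidentity_code bs"
proof -
  obtain as where a: "s = pauli_norm q \<cdot>\<^sub>m pauli_str as" "length as = q" "pauli_code as" "nonidentity_code as" using sigma_as_pauli_str[OF assms(1)] by blast
  obtain bs where b: "s' = pauli_norm q \<cdot>\<^sub>m pauli_str bs" "length bs = q" "pauli_code bs" "nonidentity_code bs" using sigma_as_pauli_str[OF assms(2)] by blast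
  have "s * s' = (pauli_norm q * pauli_norm q) \<cdot>\<^sub>m (pauli_str as * pauli_str bs)"
    using a b by simp
  also have "\<dots> = (pauli_norm q * str_phase as bs) \<cdot>\<^sub>m (pauli_norm q \<cdot>\<^sub>m pauli_str (str_idx as bs))" using pauli_str_mult[of as bs] a b by (simp add: mult_ac)
  finally show ?thesis using a b by blast
qed

lemma str_phase_nonzero: "str_phase as bs \<noteq> 0"
  using str_phase_i_power[of as bs] by auto

lemma sigma_mult_in_sigma: assumes "s \<in> sigma q" "s' \<in> sigma q" "s \<noteq> s'"
  shows "\<exists>\<tau>\<in>sigma q. \<exists>c. s * s' = c \<cdot>\<^sub>m \<tau>"
proof -
  obtain as bs where ab: "s * s' = (pauli_norm q * str_phase as bs) \<cdot>\<^sub>m (pauli_norm q \<cdot>\<^sub>m pauli_str (str_idx as bs))" "s = pauli_norm q \<cdot>\<^sub>m pauli_str as" "s' = pauli_norm q \<cdot>\<^sub>m pauli_str bs"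
     "length as = q" "length bs = q" "pauli_code as" "pauli_code bs"
    using sigma_mult[OF assms(1,2)] by blast
  have "as \<noteq> bs" using ab assms(3) by auto
  hence "nonidentity_code (str_idx as bs)" using nonidentity_code_str_idx ab by simp
  hence "pauli_norm q \<cdot>\<^sub>m pauli_str (str_idx as bs) \<in> sigma q" unfolding sigma_eq
    using ab pauli_code_str_idx by auto
  then show ?thesis using ab(1) by blast
qed

lemma sigma_mult_nonzero: assumes "s \<in> sigma q" "s' \<in> sigma q"
  shows "s * s' \<noteq> 0\<^sub>m (2^q) (2^q)"
proof
  assume z: "s * s' = 0\<^sub>m (2^q) (2^q)"
  obtain as bs where ab: "s * s' = (pauli_norm q * str_phase as bs) \<cdot>\<^sub>m (pauli_norm q \<cdot>\<^sub>m pauli_str (str_idx as bs))"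
     "length as = q" "length bs = q" "pauli_code as" "pauli_code bs"
    using sigma_mult[OF assms(1,2)] by blast
  have "hs_inner (pauli_str (str_idx as bs)) (s * s') = pauli_norm q * str_phase as bs * pauli_norm q * hs_inner (pauli_str (str_idx as bs)) (pauli_str (str_idx as bs))"
    unfolding ab(1) by (simp add: mult_ac)
  also have "\<dots> = pauli_norm q * str_phase as bs * pauli_norm q * 2 ^ q"
    using hs_inner_pauli_str[of "str_idx as bs" "str_idx as bs"] ab pauli_code_str_idx by simp
  finally have "hs_inner (pauli_str (str_idx as bs)) (s * s') \<noteq> 0"
    using str_phase_nonzero[of as bs] by simp
  then show False using z by simp
qed

lemma hs_inner_sigma_one: assumes "\<tau> \<in> sigma q" shows "hs_inner \<tau> (1\<^sub>m (2^q)) = 0"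
proof -
  obtain as where a: "\<tau> = pauli_norm q \<cdot>\<^sub>m pauli_str as" "length as = q" "pauli_code as" "nonidentity_code as" using sigma_as_pauli_str[OF assms] by blast
  have "hs_inner (pauli_str as) (pauli_str (replicate q 0)) = 0"
    using hs_inner_pauli_str[of as "replicate q 0"] a nonidentity_code_iff[of as] by (auto simp: pauli_code_def)
  moreover have ca: "pauli_str as \<in> carrier_mat (2^q) (2^q)" "pauli_str (replicate q 0) \<in> carrier_mat (2^q) (2^q)"
      using pauli_str_carrier[of as] pauli_str_carrier[of "replicate q 0"] a by simp_all
  ultimately show ?thesis
    using a hs_inner_smult_left[OF ca, of "pauli_norm q"] pauli_str_replicate_0[of q] by simp
qed

lemma sigma_square: assumes "s \<in> sigma q"
  shows "s * s = (pauli_norm q * pauli_norm q) \<cdot>\<^sub>m 1\<^sub>m (2^q)"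
proof -
  obtain as where a: "s = pauli_norm q \<cdot>\<^sub>m pauli_str as" "length as = q" "pauli_code as"
    using sigma_as_pauli_str[OF assms] by blast
  then show ?thesis using pauli_str_square[of as] by simp
qed

lemma sigma_mult_neq:
  assumes "s \<in> sigma q" "s' \<in> sigma q" "\<tau> \<in> sigma q" "s * s' = c \<cdot>\<^sub>m \<tau>"
  shows "s \<noteq> s'"
proof
  assume e: "s = s'"
  hence "(pauli_norm q * pauli_norm q) \<cdot>\<^sub>m 1\<^sub>m (2^q) = c \<cdot>\<^sub>m \<tau>"
    using sigma_square assms by metis
  hence "hs_inner \<tau> ((pauli_norm q * pauli_norm q) \<cdot>\<^sub>m 1\<^sub>m (2^q)) = c * hs_inner \<tau> \<tau>" by simp
  hence "0 = c" using hs_inner_sigma_one[OF assms(3)] hs_inner_sigma[OF assms(3) assms(3)] by simp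
  hence "s * s' = 0\<^sub>m (2^q) (2^q)" using assms(4) sigma_carrier[OF assms(3)] by auto
  then show False using sigma_mult_nonzero[OF assms(1,2)] by simp
qed

lemma sigma_mult_unique:
  assumes "s \<in> sigma q" "s' \<in> sigma q" "\<tau> \<in> sigma q" "\<tau>' \<in> sigma q"
  "s * s' = c \<cdot>\<^sub>m \<tau>" "s * s' = c' \<cdot>\<^sub>m \<tau>'"
  shows "\<tau> = \<tau>'"
proof (rule ccontr)
  assume ne: "\<tau> \<noteq> \<tau>'"
  have "hs_inner \<tau>' (c \<cdot>\<^sub>m \<tau>) = hs_inner \<tau>' (c' \<cdot>\<^sub>m \<tau>')"
    using assms by simp
  hence "c' = 0" using hs_inner_sigma[OF assms(4) assms(3)] hs_inner_sigma[OF assms(4) assms(4)] ne by simp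
  hence "s * s' = 0\<^sub>m (2^q) (2^q)" using assms(6) sigma_carrier[OF assms(4)] by auto
  then show False using sigma_mult_nonzero[OF assms(1,2)] by simp
qed

section \<open>The decomposition of \<open>V\<close>\<close>

definition Vtau_gens :: "nat \<Rightarrow> complex mat \<Rightarrow> complex mat set" where
  "Vtau_gens q \<tau> = {kron s s' | s s'. s \<in> sigma q \<and> s' \<in> sigma q
      \<and> (\<exists>c. s * s' = c \<cdot>\<^sub>m \<tau>)}"

definition Vspace_gens :: "nat \<Rightarrow> complex mat set" where
  "Vspace_gens q = {kron s s' | s s'. s \<in> sigma q \<and> s' \<in> sigma q \<and> s \<noteq> s'}"

lemma Vtau_eq_mspan: "Vtau q \<tau> = mspan (2^q * 2^q) (Vtau_gens q \<tau>)"
  unfolding Vtau_def Vtau_gens_def ..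

lemma Vspace_eq_mspan: "Vspace q = mspan (2^q * 2^q) (Vspace_gens q)"
  unfolding Vspace_def Vspace_gens_def ..

lemma kron_sigma_carrier:
  "s \<in> sigma q \<Longrightarrow> s' \<in> sigma q
      \<Longrightarrow> kron s s' \<in> carrier_mat (2^q * 2^q) (2^q * 2^q)"
  using kron_carrier[of s s'] sigma_carrier[of s q] sigma_carrier[of s' q] by auto

lemma Vtau_gens_carrier: "Vtau_gens q \<tau> \<subseteq> carrier_mat (2^q * 2^q) (2^q * 2^q)"
  unfolding Vtau_gens_def using kron_sigma_carrier by blast

lemma msubspace_Vtau: "msubspace (2^q * 2^q) (Vtau q \<tau>)"
  unfolding Vtau_eq_mspan by (rule msubspace_mspan[OF Vtau_gens_carrier])

lemma Vspace_gens_eq_UN: "Vspace_gens q = (\<Union>\<tau>\<in>sigma q. Vtau_gens q \<tau>)"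
proof (intro equalityI subsetI)
  fix G assume "G \<in> Vspace_gens q"
  then obtain s s' where G: "G = kron s s'" "s \<in> sigma q" "s' \<in> sigma q" "s \<noteq> s'"
    unfolding Vspace_gens_def by blast
  then obtain \<tau> c where "\<tau> \<in> sigma q" "s * s' = c \<cdot>\<^sub>m \<tau>"
    using sigma_mult_in_sigma by blast
  with G show "G \<in> (\<Union>\<tau>\<in>sigma q. Vtau_gens q \<tau>)" unfolding Vtau_gens_def by blast
next
  fix G assume "G \<in> (\<Union>\<tau>\<in>sigma q. Vtau_gens q \<tau>)"
  then obtain \<tau> s s' c where "\<tau> \<in> sigma q" "G = kron s s'" "s \<in> sigma q" "s' \<in> sigma q"
    "s * s' = c \<cdot>\<^sub>m \<tau>"
    unfolding Vtau_gens_def by blast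
  with sigma_mult_neq show "G \<in> Vspace_gens q" unfolding Vspace_gens_def by blast
qed

lemma hs_inner_Vtau_gens_orth:
  assumes t: "\<tau> \<in> sigma q" "\<tau>' \<in> sigma q" "\<tau> \<noteq> \<tau>'"
    and G: "G \<in> Vtau_gens q \<tau>" and H: "H \<in> Vtau_gens q \<tau>'"
  shows "hs_inner G H = 0"
proof -
  obtain s s' c where G: "G = kron s s'" "s \<in> sigma q" "s' \<in> sigma q" "s * s' = c \<cdot>\<^sub>m \<tau>"
    using G unfolding Vtau_gens_def by blast
  obtain r r' c' where H: "H = kron r r'" "r \<in> sigma q" "r' \<in> sigma q" "r * r' = c' \<cdot>\<^sub>m \<tau>'"
    using H unfolding Vtau_gens_def by blast
  have "\<not> (s = r \<and> s' = r')" using sigma_mult_unique[OF G(2,3) t(1,2) G(4)] H(4) t(3) by auto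
  moreover have "hs_inner G H = hs_inner s r * hs_inner s' r'"
    unfolding G(1) H(1) using sigma_carrier G(2,3) H(2,3) by (intro hs_inner_kron)
  ultimately show ?thesis using hs_inner_sigma[OF G(2) H(2)] hs_inner_sigma[OF G(3) H(3)] by auto
qed

lemma Vspace_direct_sum: "is_direct_sum (2 ^ q * 2 ^ q) (Vspace q) (sigma q) (Vtau q)"
proof -
  have Vtau: "Vtau q = (\<lambda>\<tau>. mspan (2^q * 2^q) (Vtau_gens q \<tau>))"
    by (rule ext) (rule Vtau_eq_mspan)
  show ?thesis unfolding Vspace_eq_mspan Vspace_gens_eq_UN Vtau
    by (rule is_direct_sum_orthogonal_mspans[OF finite_sigma Vtau_gens_carrier hs_inner_Vtau_gens_orth])
qed

section \<open>The Clifford group\<close>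

lemma assoc_mult_mat_square: "A \<in> carrier_mat n n \<Longrightarrow> B \<in> carrier_mat n n
    \<Longrightarrow> C \<in> carrier_mat n n \<Longrightarrow> A * B * C = A * (B * C)"
  by (rule assoc_mult_mat)

lemma mult_carrier_mat_square: "A \<in> carrier_mat n n \<Longrightarrow> B \<in> carrier_mat n n
    \<Longrightarrow> A * B \<in> carrier_mat n n"
  by (rule mult_carrier_mat)

lemma conj_involution_sign:
  fixes P Q :: "complex mat"
  assumes P: "P \<in> carrier_mat n n" and Q: "Q \<in> carrier_mat n n"
    and PP: "P * P = 1\<^sub>m n" and QP: "Q * P = e \<cdot>\<^sub>m (P * Q)"
  shows "P * Q * P = e \<cdot>\<^sub>m Q"
proof -
  have "P * Q * P = P * (Q * P)" using P Q by simp
  also have "\<dots> = e \<cdot>\<^sub>m (P * (P * Q))" unfolding QP using P Q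
    by (simp add: mult_smult_distrib)
  also have "P * (P * Q) = Q" using P Q PP by (simp add: assoc_mult_mat[symmetric])
  finally show ?thesis .
qed

lemma conj_anticommuting_sum:
  fixes P R Q :: "complex mat"
  assumes c: "P \<in> carrier_mat n n" "R \<in> carrier_mat n n" "Q \<in> carrier_mat n n"
    and PP: "P * P = 1\<^sub>m n" and RR: "R * R = 1\<^sub>m n" and RP: "R * P = - (P * R)"
    and QP: "Q * P = e1 \<cdot>\<^sub>m (P * Q)" and QR: "Q * R = e2 \<cdot>\<^sub>m (R * Q)"
  shows "(P + R) * Q * (P + R) = (e1 + e2) \<cdot>\<^sub>m Q + (e2 - e1) \<cdot>\<^sub>m (P * R * Q)"
proof -
  have m: "P * Q \<in> carrier_mat n n" "R * Q \<in> carrier_mat n n" "P * R \<in> carrier_mat n n"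
    "P * R * Q \<in> carrier_mat n n" using c by auto
  have 1: "P * Q * P = e1 \<cdot>\<^sub>m Q" by (rule conj_involution_sign[OF c(1,3) PP QP])
  have 2: "R * Q * R = e2 \<cdot>\<^sub>m Q" by (rule conj_involution_sign[OF c(2,3) RR QR])
  have 3: "P * Q * R = e2 \<cdot>\<^sub>m (P * R * Q)"
  proof -
    have "P * Q * R = P * (Q * R)" using c by simp
    also have "\<dots> = e2 \<cdot>\<^sub>m (P * (R * Q))" unfolding QR using c
      by (simp add: mult_smult_distrib)
    also have "P * (R * Q) = P * R * Q" using c by simp
    finally show ?thesis .
  qed
  have 4: "R * Q * P = (- e1) \<cdot>\<^sub>m (P * R * Q)"
  proof -
    have "R * Q * P = R * (Q * P)" using c by simp
    also have "\<dots> = e1 \<cdot>\<^sub>m (R * (P * Q))" unfolding QP using c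
      by (simp add: mult_smult_distrib)
    also have "R * (P * Q) = (R * P) * Q" using c by simp
    also have "\<dots> = - (P * R * Q)" unfolding RP using c by simp
    also have "e1 \<cdot>\<^sub>m (- (P * R * Q)) = (- e1) \<cdot>\<^sub>m (P * R * Q)"
      by (rule eq_matI) (use m in auto)
    finally show ?thesis .
  qed
  have "(P + R) * Q * (P + R) = (P * Q + R * Q) * (P + R)"
    using c by (simp add: add_mult_distrib_mat)
  also have "\<dots> = (P * Q) * (P + R) + (R * Q) * (P + R)"
    by (rule add_mult_distrib_mat[OF m(1) m(2) add_carrier_mat[OF c(2), of P]])
  also have "\<dots> = (P * Q * P + P * Q * R) + (R * Q * P + R * Q * R)"
    by (simp add: mult_add_distrib_mat[OF m(1) c(1) c(2)] mult_add_distrib_mat[OF m(2) c(1) c(2)])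
  also have "\<dots> = (e1 \<cdot>\<^sub>m Q + e2 \<cdot>\<^sub>m (P * R * Q)) + ((- e1) \<cdot>\<^sub>m (P * R * Q) + e2 \<cdot>\<^sub>m Q)"
    unfolding 1 2 3 4 ..
  also have "\<dots> = (e1 + e2) \<cdot>\<^sub>m Q + (e2 - e1) \<cdot>\<^sub>m (P * R * Q)"
    by (rule eq_matI) (use c m in \<open>auto simp: algebra_simps\<close>)
  finally show ?thesis .
qed

lemma clifford_carrier: "C \<in> clifford q \<Longrightarrow> C \<in> carrier_mat (2^q) (2^q)"
  by (simp add: clifford_def)

lemma clifford_mult_adj: "C \<in> clifford q \<Longrightarrow> C * adj C = 1\<^sub>m (2^q)"
  by (simp add: clifford_def)

lemma clifford_adj_mult: "C \<in> clifford q \<Longrightarrow> adj C * C = 1\<^sub>m (2^q)"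
  using mat_mult_left_right_inverse[OF clifford_carrier adj_carrier2[OF clifford_carrier] clifford_mult_adj] by blast

lemma clifford_conj_pauli: "C \<in> clifford q \<Longrightarrow> P \<in> pauli_group q
    \<Longrightarrow> C * P * adj C \<in> pauli_group q"
  by (simp add: clifford_def)

lemma pauli_group_carrier: "P \<in> pauli_group q \<Longrightarrow> P \<in> carrier_mat (2^q) (2^q)"
proof -
  assume "P \<in> pauli_group q"
  then obtain Ps where "P = kron_list Ps" "length Ps = q" "set Ps \<subseteq> pauli1_group"
    unfolding pauli_group_def by blast
  then show "P \<in> carrier_mat (2^q) (2^q)"
  proof (induction Ps arbitrary: P q)
    case Nil then show ?case by simp
  next
    case (Cons A Ps)
    have k: "kron_list Ps \<in> carrier_mat (2^length Ps) (2^length Ps)" using Cons by auto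
    have a: "A \<in> carrier_mat 2 2" using Cons pauli1_group_carrier by auto
    have "kron A (kron_list Ps) \<in> carrier_mat (2 * 2^length Ps) (2 * 2^length Ps)"
      using kron_carrier[of A "kron_list Ps"] carrier_matD[OF k] carrier_matD[OF a] by simp
    then show ?case using Cons.prems(1) Cons.prems(2)[symmetric] by simp
  qed
qed

lemma one_mem_clifford: "1\<^sub>m (2^q) \<in> clifford q"
proof -
  have "\<forall>P\<in>pauli_group q. 1\<^sub>m (2^q) * P * adj (1\<^sub>m (2^q)) \<in> pauli_group q"
  proof
    fix P assume P: "P \<in> pauli_group q"
    show "1\<^sub>m (2^q) * P * adj (1\<^sub>m (2^q)) \<in> pauli_group q"
      using pauli_group_carrier[OF P] P by simp
  qed
  then show ?thesis unfolding clifford_def by simp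
qed

lemma mult_mem_clifford: assumes "C \<in> clifford q" "D \<in> clifford q" shows "C * D \<in> clifford q"
proof -
  have c: "C \<in> carrier_mat (2^q) (2^q)" "D \<in> carrier_mat (2^q) (2^q)"
    "adj C \<in> carrier_mat (2^q) (2^q)" "adj D \<in> carrier_mat (2^q) (2^q)"
    using assms clifford_carrier adj_carrier2 by blast+
  have adj: "adj (C * D) = adj D * adj C" by (rule adj_mult[OF c(1,2)])
  have "C * D * adj (C * D) = C * (D * adj D) * adj C" unfolding adj using c
    by (simp add: assoc_mult_mat_square[where n="2^q"] mult_carrier_mat_square[where n="2^q"])
  also have "\<dots> = 1\<^sub>m (2^q)"
    using clifford_mult_adj[OF assms(2)] clifford_mult_adj[OF assms(1)] c by simp
  finally have u: "C * D * adj (C * D) = 1\<^sub>m (2^q)" .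
  have p: "C * D * P * adj (C * D) \<in> pauli_group q" if P: "P \<in> pauli_group q" for P
  proof -
    have DP: "D * P * adj D \<in> pauli_group q" using clifford_conj_pauli[OF assms(2) P] .
    have Pc: "P \<in> carrier_mat (2^q) (2^q)" using pauli_group_carrier[OF P] .
    have "C * D * P * adj (C * D) = C * (D * P * adj D) * adj C" unfolding adj using c Pc
      by (simp add: assoc_mult_mat_square[where n="2^q"] mult_carrier_mat_square[where n="2^q"])
    then show ?thesis using clifford_conj_pauli[OF assms(1) DP] by simp
  qed
  show ?thesis unfolding clifford_def using u p c by auto
qed

lemma clifford_conj_cancel: assumes C: "C \<in> clifford q" and M: "M \<in> carrier_mat (2^q) (2^q)"
  shows "adj C * (C * M * adj C) * C = M"
proof -
  have c: "C \<in> carrier_mat (2^q) (2^q)" "adj C \<in> carrier_mat (2^q) (2^q)"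
    using C clifford_carrier adj_carrier2 by blast+
  have "adj C * (C * M * adj C) * C = (adj C * C) * M * (adj C * C)"
    using c M by (simp add: assoc_mult_mat_square[where n="2^q"] mult_carrier_mat_square[where n="2^q"])
  also have "\<dots> = M" using clifford_adj_mult[OF C] M by simp
  finally show ?thesis .
qed

lemma clifford_conj_mult: assumes C: "C \<in> clifford q" and A: "A \<in> carrier_mat (2^q) (2^q)"
  and B: "B \<in> carrier_mat (2^q) (2^q)"
  shows "(C * A * adj C) * (C * B * adj C) = C * (A * B) * adj C"
proof -
  have c: "C \<in> carrier_mat (2^q) (2^q)" "adj C \<in> carrier_mat (2^q) (2^q)"
    using C clifford_carrier adj_carrier2 by blast+
  have "(C * A * adj C) * (C * B * adj C) = C * A * (adj C * C) * B * adj C"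
    using c A B by (simp add: assoc_mult_mat_square[where n="2^q"] mult_carrier_mat_square[where n="2^q"])
  also have "\<dots> = C * (A * B) * adj C"
    using clifford_adj_mult[OF C] c A B
      by (simp add: assoc_mult_mat_square[where n="2^q"] mult_carrier_mat_square[where n="2^q"])
  finally show ?thesis .
qed

lemma adj_conj_hermitian:
  assumes C: "C \<in> carrier_mat n n" and A: "A \<in> carrier_mat n n" and "adj A = A"
  shows "adj (C * A * adj C) = C * A * adj C"
proof -
  have "adj (C * A * adj C) = adj (adj C) * adj (C * A)"
    by (rule adj_mult[OF mult_carrier_mat[OF C A] adj_carrier2[OF C]])
  also have "\<dots> = C * (A * adj C)" using adj_mult[OF C A] assms by simp
  also have "\<dots> = C * A * adj C" by (rule assoc_mult_mat[OF C A adj_carrier2[OF C], symmetric])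
  finally show ?thesis .
qed

lemma i_power_real: "cnj (\<i>^k) = \<i>^k \<Longrightarrow> \<i>^k = 1 \<or> \<i>^k = (-1::complex)"
proof -
  assume h: "cnj (\<i>^k) = \<i>^k"
  have gen: "\<i>^(4*m + r) = \<i>^r" for m r :: nat
  proof -
    have "\<i>^(4*m + r) = (\<i>^4)^m * \<i>^r" by (simp only: power_add power_mult)
    also have "\<i>^4 = (1::complex)" by (simp add: power4_eq_xxxx)
    finally show ?thesis by simp
  qed
  have k: "k = 4 * (k div 4) + k mod 4"
    by (rule div_mult_mod_eq[symmetric, THEN trans]) (simp add: mult.commute)
  have e: "\<i>^k = \<i>^(k mod 4)" using gen[of "k div 4" "k mod 4"] k by metis
  have i2: "\<i>^2 = (-1::complex)" by (simp add: power2_eq_square)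
  have i3: "\<i>^3 = - \<i>" by (simp add: power3_eq_cube)
  have "k mod 4 < 4" by simp
  hence "k mod 4 = 0 \<or> k mod 4 = 1 \<or> k mod 4 = 2 \<or> k mod 4 = 3" by linarith
  then show ?thesis
  proof (elim disjE)
    assume "k mod 4 = 0" then show ?thesis using e by simp
  next
    assume "k mod 4 = 1" then have "\<i>^k = \<i>" using e by simp
    then show ?thesis using h by simp
  next
    assume "k mod 4 = 2" then show ?thesis using e i2 by simp
  next
    assume "k mod 4 = 3" then have "\<i>^k = - \<i>" using e i3 by simp
    then show ?thesis using h by simp
  qed
qed

lemma phased_str_hermitian_sign:
  assumes bs: "pauli_code bs"
    and herm: "adj (\<i>^k \<cdot>\<^sub>m pauli_str bs) = \<i>^k \<cdot>\<^sub>m pauli_str bs"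
  shows "\<i>^k = 1 \<or> \<i>^k = (-1::complex)"
proof -
  have "cnj (\<i>^k) \<cdot>\<^sub>m pauli_str bs = \<i>^k \<cdot>\<^sub>m pauli_str bs"
    using herm adj_pauli_str[OF bs] by simp
  hence "hs_inner (pauli_str bs) (cnj (\<i>^k) \<cdot>\<^sub>m pauli_str bs) = hs_inner (pauli_str bs) (\<i>^k \<cdot>\<^sub>m pauli_str bs)"
    by simp
  hence "cnj (\<i>^k) = \<i>^k" using hs_inner_pauli_str[of bs bs] bs by simp
  then show ?thesis by (rule i_power_real)
qed

lemma pauli_str_neq_smult_one:
  assumes as: "pauli_code as" "nonidentity_code as"
  shows "pauli_str as \<noteq> c \<cdot>\<^sub>m 1\<^sub>m (2 ^ length as)"
proof
  let ?z = "replicate (length as) 0"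
  assume e: "pauli_str as = c \<cdot>\<^sub>m 1\<^sub>m (2 ^ length as)"
  have z: "pauli_code ?z" by (simp add: pauli_code_def)
  have "hs_inner (pauli_str ?z) (pauli_str as) = 0"
    using hs_inner_pauli_str[OF _ z as(1)] as(2) nonidentity_code_iff[of as] by auto
  moreover have "hs_inner (pauli_str ?z) (pauli_str as) = c * hs_inner (pauli_str ?z) (pauli_str ?z)"
    by (simp add: e pauli_str_replicate_0)
  ultimately have "c = 0" using hs_inner_pauli_str[OF _ z z] by simp
  then have "hs_inner (pauli_str as) (pauli_str as) = 0" unfolding e by simp
  then show False using hs_inner_pauli_str[OF _ as(1) as(1)] by simp
qed

lemma phased_strs_smult: "M \<in> phased_strs q
    \<Longrightarrow> \<i>^j \<cdot>\<^sub>m M \<in> phased_strs q"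
proof -
  assume "M \<in> phased_strs q"
  then obtain k as where "M = \<i>^k \<cdot>\<^sub>m pauli_str as" "length as = q" "pauli_code as"
    unfolding phased_strs_def by blast
  hence "\<i>^j \<cdot>\<^sub>m M = \<i>^(j+k) \<cdot>\<^sub>m pauli_str as \<and> length as = q
      \<and> pauli_code as" by (simp add: power_add)
  then show ?thesis unfolding phased_strs_def by blast
qed

lemma pauli_str_in_phased_strs: "length as = q \<Longrightarrow> pauli_code as
    \<Longrightarrow> pauli_str as \<in> phased_strs q"
  unfolding phased_strs_def by (rule CollectI, rule exI[of _ 0], rule exI[of _ as]) simp

lemma uminus_in_phased_strs: "M \<in> phased_strs q \<Longrightarrow> - M \<in> phased_strs q"
proof -
  assume "M \<in> phased_strs q"
  hence "\<i>^2 \<cdot>\<^sub>m M \<in> phased_strs q" by (rule phased_strs_smult)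
  moreover have "\<i>^2 \<cdot>\<^sub>m M = - M" by (rule eq_matI) auto
  ultimately show ?thesis by simp
qed

lemma clifford_conj_sigma:
  assumes q: "q \<ge> 1" and C: "C \<in> clifford q" and t: "\<tau> \<in> sigma q"
  shows "\<exists>\<tau>'\<in>sigma q. \<exists>e. (e = 1 \<or> e = -1)
      \<and> C * \<tau> * adj C = e \<cdot>\<^sub>m \<tau>'"
proof -
  obtain as where a: "\<tau> = pauli_norm q \<cdot>\<^sub>m pauli_str as" "length as = q" "pauli_code as" "nonidentity_code as"
    using sigma_as_pauli_str[OF t] by blast
  have Cc: "C \<in> carrier_mat (2^q) (2^q)" "adj C \<in> carrier_mat (2^q) (2^q)"
    using C clifford_carrier adj_carrier2 by blast+
  have Sc: "pauli_str as \<in> carrier_mat (2^q) (2^q)" using pauli_str_carrier[of as] a by simp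
  have "C * pauli_str as * adj C \<in> phased_strs q"
    using clifford_conj_pauli[OF C] pauli_str_in_phased_strs[OF a(2,3)] pauli_group_eq_phased_strs[OF q]
    by simp
  then obtain k bs where b: "C * pauli_str as * adj C = \<i>^k \<cdot>\<^sub>m pauli_str bs" "length bs = q" "pauli_code bs"
    unfolding phased_strs_def by blast
  have e: "\<i>^k = 1 \<or> \<i>^k = (-1::complex)"
    using phased_str_hermitian_sign[OF b(3)] adj_conj_hermitian[OF Cc(1) Sc adj_pauli_str[OF a(3)]] b(1)
    by simp
  have "nonidentity_code bs"
  proof (rule ccontr)
    assume "\<not> nonidentity_code bs"
    hence "C * pauli_str as * adj C = \<i>^k \<cdot>\<^sub>m 1\<^sub>m (2^q)"
      using b pauli_str_eq_one_iff[OF b(3)] by simp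
    hence "pauli_str as = adj C * (\<i>^k \<cdot>\<^sub>m 1\<^sub>m (2^q)) * C"
      using clifford_conj_cancel[OF C Sc] by simp
    also have "\<dots> = \<i>^k \<cdot>\<^sub>m 1\<^sub>m (2^q)" using Cc clifford_adj_mult[OF C] by simp
    finally have "pauli_str as = \<i>^k \<cdot>\<^sub>m 1\<^sub>m (2 ^ length as)" using a(2) by simp
    with pauli_str_neq_smult_one[OF a(3,4)] show False by blast
  qed
  then have t': "pauli_norm q \<cdot>\<^sub>m pauli_str bs \<in> sigma q" unfolding sigma_eq using b by blast
  have "C * \<tau> * adj C = pauli_norm q \<cdot>\<^sub>m (C * pauli_str as * adj C)"
    unfolding a(1) using Cc Sc a(2) by (simp add: mult_smult_distrib assoc_mult_mat_square[where n="2^q"])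
  also have "\<dots> = \<i>^k \<cdot>\<^sub>m (pauli_norm q \<cdot>\<^sub>m pauli_str bs)"
    unfolding b(1) by (simp add: mult.commute)
  finally show ?thesis using t' e by blast
qed

(* For anticommuting strings P and R, the Hermitian unitary (P + R)/\<surd>2 conjugates P to R. *)
definition pauli_rotation :: "nat list \<Rightarrow> nat list \<Rightarrow> complex mat" where
  "pauli_rotation as rs = pauli_norm 1 \<cdot>\<^sub>m (pauli_str as + pauli_str rs)"

lemma neg_one_smult: "(-1::complex) \<cdot>\<^sub>m M = - M"
  by (rule eq_matI) auto

lemma pauli_str_anticommute:
  assumes "length as = length rs" "pauli_code as" "pauli_code rs" "str_anticomm as rs"
  shows "pauli_str rs * pauli_str as = - (pauli_str as * pauli_str rs)"
proof -
  have "str_anticomm rs as" using str_anticomm_commute[of rs as] assms by simp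
  then show ?thesis using pauli_str_commute[of rs as] assms by (simp add: neg_one_smult)
qed

lemma pauli_str_commute_sign: assumes "length as = length bs" "pauli_code as" "pauli_code bs"
  shows "pauli_str bs * pauli_str as = (if str_anticomm bs as then -1 else 1) \<cdot>\<^sub>m (pauli_str as * pauli_str bs)"
  using pauli_str_commute[of bs as] assms by simp

lemma pauli_norm_1_square: "pauli_norm 1 * pauli_norm 1 * 2 = 1" using pauli_norm_square[of 1] by simp

lemma pauli_norm_1_square': "pauli_norm 1 * (pauli_norm 1 * 2) = 1" using pauli_norm_1_square
  by (simp add: mult.assoc)

lemma pauli_rotation_facts: assumes l: "length as = q" "length rs = q"
  and v: "pauli_code as" "pauli_code rs" and an: "str_anticomm as rs"
  shows "pauli_rotation as rs \<in> carrier_mat (2^q) (2^q)" "adj (pauli_rotation as rs) = pauli_rotation as rs"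
    "pauli_rotation as rs * pauli_rotation as rs = 1\<^sub>m (2^q)" "pauli_rotation as rs * pauli_str as * pauli_rotation as rs = pauli_str rs"
proof -
  let ?P = "pauli_str as" and ?R = "pauli_str rs" and ?n = "2^q"
  have c: "?P \<in> carrier_mat ?n ?n" "?R \<in> carrier_mat ?n ?n" using pauli_str_carrier l by metis+
  have PP: "?P * ?P = 1\<^sub>m ?n" using pauli_str_square[OF v(1)] l by simp
  have RR: "?R * ?R = 1\<^sub>m ?n" using pauli_str_square[OF v(2)] l by simp
  have RP: "?R * ?P = - (?P * ?R)" using pauli_str_anticommute[of as rs] l v an by simp
  show uc: "pauli_rotation as rs \<in> carrier_mat (2^q) (2^q)" unfolding pauli_rotation_def using c by simp
  show "adj (pauli_rotation as rs) = pauli_rotation as rs" unfolding pauli_rotation_def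
    using adj_add[OF c] adj_pauli_str v by simp
  have oc: "1\<^sub>m ?n \<in> carrier_mat ?n ?n" by simp
  have "(?P + ?R) * 1\<^sub>m ?n * (?P + ?R) = (1 + 1) \<cdot>\<^sub>m 1\<^sub>m ?n + (1 - 1) \<cdot>\<^sub>m (?P * ?R * 1\<^sub>m ?n)"
    by (rule conj_anticommuting_sum[OF c oc PP RR RP]) (use c l in simp_all)
  moreover have "(?P + ?R) * 1\<^sub>m ?n = ?P + ?R" using c l by simp
  moreover have "(1 + 1) \<cdot>\<^sub>m 1\<^sub>m ?n + (1 - 1) \<cdot>\<^sub>m (?P * ?R * 1\<^sub>m ?n) = (2::complex) \<cdot>\<^sub>m 1\<^sub>m ?n"
    by (rule eq_matI) (use c l in auto)
  ultimately have "(?P + ?R) * (?P + ?R) = 2 \<cdot>\<^sub>m 1\<^sub>m ?n" by simp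
  hence "pauli_rotation as rs * pauli_rotation as rs = pauli_norm 1 \<cdot>\<^sub>m (pauli_norm 1 \<cdot>\<^sub>m (2 \<cdot>\<^sub>m 1\<^sub>m ?n))" unfolding pauli_rotation_def using c l
    by (simp del: smult_smult_mat)
  also have "\<dots> = 1\<^sub>m ?n" by (simp only: smult_smult_mat pauli_norm_1_square' one_smult_mat)
  finally show "pauli_rotation as rs * pauli_rotation as rs = 1\<^sub>m (2^q)" .
  have PR: "?P * ?R = (-1) \<cdot>\<^sub>m (?R * ?P)" using RP c by (simp add: neg_one_smult)
  have "(?P + ?R) * ?P * (?P + ?R) = (1 + -1) \<cdot>\<^sub>m ?P + (-1 - 1) \<cdot>\<^sub>m (?P * ?R * ?P)"
    by (rule conj_anticommuting_sum[OF c c(1) PP RR RP]) (use PR c in simp_all)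
  moreover have "?P * ?R * ?P = - ?R"
  proof -
    have "?P * ?R * ?P = ?P * (?R * ?P)" using c by simp
    also have "\<dots> = - (?P * ?P * ?R)" unfolding RP using c by simp
    finally show ?thesis using PP c l by simp
  qed
  ultimately have "(?P + ?R) * ?P * (?P + ?R) = 2 \<cdot>\<^sub>m ?R"
    by (intro eq_matI) (use c l in auto)
  hence "pauli_rotation as rs * ?P * pauli_rotation as rs = pauli_norm 1 \<cdot>\<^sub>m (pauli_norm 1 \<cdot>\<^sub>m (2 \<cdot>\<^sub>m ?R))" unfolding pauli_rotation_def using c l
    by (simp del: smult_smult_mat)
  also have "\<dots> = ?R" by (simp only: smult_smult_mat pauli_norm_1_square' one_smult_mat)
  finally show "pauli_rotation as rs * pauli_str as * pauli_rotation as rs = pauli_str rs" .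
qed

lemma pauli_str_triple_in_phased_strs:
  assumes "length as = q" "length rs = q" "length bs = q" "pauli_code as" "pauli_code rs" "pauli_code bs"
  shows "pauli_str as * pauli_str rs * pauli_str bs \<in> phased_strs q"
proof -
  let ?m = "str_idx as rs"
  have m: "length ?m = q" "pauli_code ?m" using assms pauli_code_str_idx by auto
  obtain a where a: "str_phase as rs = \<i>^a" using str_phase_i_power by blast
  obtain b where b: "str_phase ?m bs = \<i>^b" using str_phase_i_power by blast
  have "pauli_str as * pauli_str rs * pauli_str bs = str_phase as rs \<cdot>\<^sub>m (pauli_str ?m * pauli_str bs)"
    using pauli_str_mult[of as rs] assms m by simp
  also have "\<dots> = \<i>^(a+b) \<cdot>\<^sub>m pauli_str (str_idx ?m bs)"
    using pauli_str_mult[of ?m bs] assms m a b by (simp add: power_add)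
  finally show ?thesis using phased_strs_smult[OF pauli_str_in_phased_strs[of "str_idx ?m bs" q], of "a+b"] pauli_code_str_idx[of ?m bs] m assms by simp
qed

lemma half_sign_combination: assumes h: "h * 2 = (1::complex)" and A: "A \<in> carrier_mat n n"
  and B: "B \<in> carrier_mat n n"
  and e: "e1 = 1 \<or> e1 = -1" "e2 = 1 \<or> e2 = -1"
  shows "h \<cdot>\<^sub>m ((e1 + e2) \<cdot>\<^sub>m A + (e2 - e1) \<cdot>\<^sub>m B) = (if e1 = e2 then e1 \<cdot>\<^sub>m A else e2 \<cdot>\<^sub>m B)"
proof -
  have h2: "h = 1/2" using h by (simp add: eq_divide_eq)
  show ?thesis
    by (rule eq_matI) (use A B e h2 in auto)
qed

lemma pauli_rotation_conj_pauli_str: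
  assumes l: "length as = q" "length rs = q" "length bs = q"
    and v: "pauli_code as" "pauli_code rs" "pauli_code bs" and an: "str_anticomm as rs"
  shows "pauli_rotation as rs * pauli_str bs * pauli_rotation as rs \<in> phased_strs q"
proof -
  let ?P = "pauli_str as" and ?R = "pauli_str rs" and ?Q = "pauli_str bs" and ?n = "2^q"
  let ?e1 = "(if str_anticomm bs as then -1 else 1) :: complex"
    and ?e2 = "(if str_anticomm bs rs then -1 else 1) :: complex"
  have c: "?P \<in> carrier_mat ?n ?n" "?R \<in> carrier_mat ?n ?n" "?Q \<in> carrier_mat ?n ?n"
    using pauli_str_carrier l by metis+
  have PP: "?P * ?P = 1\<^sub>m ?n" using pauli_str_square[OF v(1)] l by simp
  have RR: "?R * ?R = 1\<^sub>m ?n" using pauli_str_square[OF v(2)] l by simp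
  have RP: "?R * ?P = - (?P * ?R)" using pauli_str_anticommute[of as rs] l v an by simp
  have QP: "?Q * ?P = ?e1 \<cdot>\<^sub>m (?P * ?Q)" using pauli_str_commute_sign[of as bs] l v by simp
  have QR: "?Q * ?R = ?e2 \<cdot>\<^sub>m (?R * ?Q)" using pauli_str_commute_sign[of rs bs] l v by simp
  have "pauli_rotation as rs * ?Q * pauli_rotation as rs =
      pauli_norm 1 \<cdot>\<^sub>m (pauli_norm 1 \<cdot>\<^sub>m ((?P + ?R) * ?Q * (?P + ?R)))"
    unfolding pauli_rotation_def using c l by (simp del: smult_smult_mat)
  also have "\<dots> = (pauli_norm 1 * pauli_norm 1) \<cdot>\<^sub>m ((?e1 + ?e2) \<cdot>\<^sub>m ?Q + (?e2 - ?e1) \<cdot>\<^sub>m (?P * ?R * ?Q))"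
    unfolding conj_anticommuting_sum[OF c PP RR RP QP QR] by (simp only: smult_smult_mat)
  also have "\<dots> = (if ?e1 = ?e2 then ?e1 \<cdot>\<^sub>m ?Q else ?e2 \<cdot>\<^sub>m (?P * ?R * ?Q))"
    by (rule half_sign_combination) (use pauli_norm_1_square c in \<open>auto simp: mult.assoc\<close>)
  also have "\<dots> \<in> phased_strs q"
  proof -
    have "?Q \<in> phased_strs q" by (rule pauli_str_in_phased_strs[OF l(3) v(3)])
    moreover have "?P * ?R * ?Q \<in> phased_strs q" by (rule pauli_str_triple_in_phased_strs[OF l v])
    ultimately show ?thesis using uminus_in_phased_strs by (auto simp: neg_one_smult)
  qed
  finally show ?thesis .
qed

lemma pauli_rotation_clifford:
  assumes q: "q \<ge> 1" and l: "length as = q" "length rs = q" and v: "pauli_code as" "pauli_code rs"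
    and an: "str_anticomm as rs"
  shows "pauli_rotation as rs \<in> clifford q"
proof -
  note UF = pauli_rotation_facts[OF l v an]
  have "\<forall>M\<in>pauli_group q. pauli_rotation as rs * M * adj (pauli_rotation as rs) \<in> pauli_group q"
  proof
    fix M assume "M \<in> pauli_group q"
    then obtain k bs where M: "M = \<i>^k \<cdot>\<^sub>m pauli_str bs" "length bs = q" "pauli_code bs"
      using pauli_group_eq_phased_strs[OF q] unfolding phased_strs_def by blast
    have "pauli_rotation as rs * M * adj (pauli_rotation as rs) =
        \<i>^k \<cdot>\<^sub>m (pauli_rotation as rs * pauli_str bs * pauli_rotation as rs)"
      unfolding M(1) UF(2) using UF(1) M(2) by (simp add: mult_smult_distrib)
    also have "\<dots> \<in> phased_strs q"
      by (rule phased_strs_smult[OF pauli_rotation_conj_pauli_str[OF l M(2) v M(3) an]])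
    finally show "pauli_rotation as rs * M * adj (pauli_rotation as rs) \<in> pauli_group q"
      using pauli_group_eq_phased_strs[OF q] by simp
  qed
  then show ?thesis unfolding clifford_def using UF by simp
qed

(* The adjoint is also asserted to be Clifford; this spares us proving that clifford q is
   closed under adjoints. Commuting strings are linked through a third string. *)
lemma clifford_transitive_sigma: assumes q: "q \<ge> 1" and t: "\<tau> \<in> sigma q" "\<tau>' \<in> sigma q"
  shows "\<exists>C. C \<in> clifford q \<and> adj C \<in> clifford q \<and> C * \<tau> * adj C = \<tau>'"
proof (cases "\<tau> = \<tau>'")
  case True
  have "1\<^sub>m (2^q) * \<tau> * adj (1\<^sub>m (2^q)) = \<tau>'" using True sigma_carrier[OF t(1)] by simp
  then show ?thesis using one_mem_clifford[of q] by (intro exI[of _ "1\<^sub>m (2^q)"]) simp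
next
  case False
  obtain as where a: "\<tau> = pauli_norm q \<cdot>\<^sub>m pauli_str as" "length as = q" "pauli_code as" "nonidentity_code as" using sigma_as_pauli_str[OF t(1)] by blast
  obtain bs where b: "\<tau>' = pauli_norm q \<cdot>\<^sub>m pauli_str bs" "length bs = q" "pauli_code bs" "nonidentity_code bs" using sigma_as_pauli_str[OF t(2)] by blast
  have "as \<noteq> bs" using False a b by auto
  then obtain rs where r: "length rs = q" "pauli_code rs" "str_anticomm as rs" "str_anticomm bs rs"
    using exists_code_anticomm_pattern[of as bs True True] a b by auto
  have r': "str_anticomm rs bs" using str_anticomm_commute[of rs bs] r b by simp
  let ?U1 = "pauli_rotation as rs" and ?U2 = "pauli_rotation rs bs"
  note U1 = pauli_rotation_facts[OF a(2) r(1) a(3) r(2) r(3)]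
  note U2 = pauli_rotation_facts[OF r(1) b(2) r(2) b(3) r']
  have C1: "?U1 \<in> clifford q" by (rule pauli_rotation_clifford[OF q a(2) r(1) a(3) r(2) r(3)])
  have C2: "?U2 \<in> clifford q" by (rule pauli_rotation_clifford[OF q r(1) b(2) r(2) b(3) r'])
  have Sa: "pauli_str as \<in> carrier_mat (2^q) (2^q)" using pauli_str_carrier a(2) by metis
  have Sr: "pauli_str rs \<in> carrier_mat (2^q) (2^q)" using pauli_str_carrier r(1) by metis
  have adjC: "adj (?U2 * ?U1) = ?U1 * ?U2" using adj_mult[OF U2(1) U1(1)] U1(2) U2(2) by simp
  have "?U2 * ?U1 * \<tau> * adj (?U2 * ?U1) = pauli_norm q \<cdot>\<^sub>m (?U2 * (?U1 * pauli_str as * ?U1) * ?U2)"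
    unfolding adjC a(1) using U1(1) U2(1) Sa a(2) carrier_matD[OF U1(1)] carrier_matD[OF U2(1)]
    by (simp add: mult_smult_distrib assoc_mult_mat_square[where n="2^q"] mult_carrier_mat_square[where n="2^q"])
  also have "\<dots> = \<tau>'" unfolding U1(4) U2(4) b(1) ..
  finally have e: "?U2 * ?U1 * \<tau> * adj (?U2 * ?U1) = \<tau>'" .
  have "?U2 * ?U1 \<in> clifford q" by (rule mult_mem_clifford[OF C2 C1])
  moreover have "adj (?U2 * ?U1) \<in> clifford q" unfolding adjC by (rule mult_mem_clifford[OF C1 C2])
  ultimately show ?thesis using e by blast
qed

section \<open>The two-copy representation\<close>

lemma kronCC_carrier: "C \<in> carrier_mat d d \<Longrightarrow> kron C C \<in> carrier_mat (d*d) (d*d)"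
  using kron_carrier[of C C] by auto

lemma adj_kronCC_carrier: "C \<in> carrier_mat d d
    \<Longrightarrow> adj (kron C C) \<in> carrier_mat (d*d) (d*d)"
  using adj_carrier2[OF kronCC_carrier] by blast

lemma phi2_carrier: "C \<in> carrier_mat d d \<Longrightarrow> M \<in> carrier_mat (d*d) (d*d)
    \<Longrightarrow> phi2 C M \<in> carrier_mat (d*d) (d*d)"
  unfolding phi2_def using kronCC_carrier adj_kronCC_carrier by (metis mult_carrier_mat)

lemma phi2_add: assumes "C \<in> carrier_mat d d" "M1 \<in> carrier_mat (d*d) (d*d)" "M2 \<in> carrier_mat (d*d) (d*d)"
  shows "phi2 C (M1 + M2) = phi2 C M1 + phi2 C M2"
proof -
  have K: "kron C C \<in> carrier_mat (d*d) (d*d)" "adj (kron C C) \<in> carrier_mat (d*d) (d*d)"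
    using kronCC_carrier adj_kronCC_carrier assms(1) by blast+
  have "kron C C * (M1 + M2) = kron C C * M1 + kron C C * M2"
    by (rule mult_add_distrib_mat[OF K(1) assms(2,3)])
  hence "phi2 C (M1 + M2) = (kron C C * M1 + kron C C * M2) * adj (kron C C)" unfolding phi2_def by simp
  also have "\<dots> = phi2 C M1 + phi2 C M2" unfolding phi2_def
    by (rule add_mult_distrib_mat[OF mult_carrier_mat[OF K(1) assms(2)] mult_carrier_mat[OF K(1) assms(3)] K(2)])
  finally show ?thesis .
qed

lemma phi2_smult: assumes "C \<in> carrier_mat d d" "M \<in> carrier_mat (d*d) (d*d)"
  shows "phi2 C (c \<cdot>\<^sub>m M) = c \<cdot>\<^sub>m phi2 C M"
proof -
  have K: "kron C C \<in> carrier_mat (d*d) (d*d)" "adj (kron C C) \<in> carrier_mat (d*d) (d*d)"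
    using kronCC_carrier adj_kronCC_carrier assms(1) by blast+
  show ?thesis unfolding phi2_def using K assms(2) carrier_matD[OF K(1)] carrier_matD[OF assms(2)]
    by (simp add: mult_smult_distrib assoc_mult_mat_square[where n="d*d"] mult_carrier_mat_square[where n="d*d"])
qed

lemma phi2_zero: assumes "C \<in> carrier_mat d d"
  shows "phi2 C (0\<^sub>m (d*d) (d*d)) = 0\<^sub>m (d*d) (d*d)"
proof -
  have K: "kron C C \<in> carrier_mat (d*d) (d*d)" "adj (kron C C) \<in> carrier_mat (d*d) (d*d)"
    using kronCC_carrier adj_kronCC_carrier assms(1) by blast+
  show ?thesis unfolding phi2_def
    using right_mult_zero_mat[OF K(1), of "d*d"] left_mult_zero_mat[OF K(2)] by simp
qed

lemma phi2_msum: assumes C: "C \<in> carrier_mat d d" and "finite I" and "\<And>i. i \<in> I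
    \<Longrightarrow> f i \<in> carrier_mat (d*d) (d*d)"
  shows "phi2 C (msum (d*d) f I) = msum (d*d) (\<lambda>i. phi2 C (f i)) I"
  using assms(2,3)
proof (induction I rule: finite_induct)
  case empty then show ?case using phi2_zero[OF C] by simp
next
  case (insert x I)
  have fx: "f x \<in> carrier_mat (d*d) (d*d)" using insert by auto
  have "phi2 C (msum (d*d) f (insert x I)) = phi2 C (f x + msum (d*d) f I)"
    using msum_insert[where f=f and N="d*d", OF insert(1,2) fx] by simp
  also have "\<dots> = phi2 C (f x) + phi2 C (msum (d*d) f I)" by (rule phi2_add[OF C fx msum_carrier])
  also have "\<dots> = phi2 C (f x) + msum (d*d) (\<lambda>i. phi2 C (f i)) I" using insert by simp
  also have "\<dots> = msum (d*d) (\<lambda>i. phi2 C (f i)) (insert x I)"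
    using msum_insert[where f="\<lambda>i. phi2 C (f i)"
      and N="d*d", OF insert(1,2) phi2_carrier[OF C fx]] by simp
  finally show ?case .
qed

lemma phi2_kron: assumes C: "C \<in> carrier_mat d d" and A: "A \<in> carrier_mat d d"
  and B: "B \<in> carrier_mat d d"
  shows "phi2 C (kron A B) = kron (C * A * adj C) (C * B * adj C)"
proof -
  have aC: "adj C \<in> carrier_mat d d" using adj_carrier2[OF C] .
  have "kron C C * kron A B = kron (C * A) (C * B)" by (rule kron_mult[OF C C A B])
  moreover have "adj (kron C C) = kron (adj C) (adj C)" by (rule adj_kron)
  moreover have "kron (C * A) (C * B) * kron (adj C) (adj C) = kron (C * A * adj C) (C * B * adj C)"
    by (rule kron_mult[OF mult_carrier_mat[OF C A] mult_carrier_mat[OF C B] aC aC])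
  ultimately show ?thesis unfolding phi2_def by simp
qed

lemma phi2_mult: assumes C: "C \<in> carrier_mat d d" and D: "D \<in> carrier_mat d d"
  and M: "M \<in> carrier_mat (d*d) (d*d)"
  shows "phi2 (C * D) M = phi2 C (phi2 D M)"
proof -
  have K: "kron C C \<in> carrier_mat (d*d) (d*d)" "adj (kron C C) \<in> carrier_mat (d*d) (d*d)"
    "kron D D \<in> carrier_mat (d*d) (d*d)" "adj (kron D D) \<in> carrier_mat (d*d) (d*d)"
    using kronCC_carrier adj_kronCC_carrier C D by blast+
  have k: "kron (C * D) (C * D) = kron C C * kron D D" by (rule kron_mult[OF C C D D, symmetric])
  have a: "adj (kron C C * kron D D) = adj (kron D D) * adj (kron C C)"
    by (rule adj_mult[OF K(1) K(3)])
  show ?thesis unfolding phi2_def k a using K M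
    by (simp add: assoc_mult_mat_square[where n="d*d"] mult_carrier_mat_square[where n="d*d"])
qed

lemma phi2_one: assumes M: "M \<in> carrier_mat (d*d) (d*d)" shows "phi2 (1\<^sub>m d) M = M"
  unfolding phi2_def kron_one using M by simp

lemma phi2_mspan_subset:
  assumes C: "C \<in> carrier_mat d d" and G: "G \<subseteq> carrier_mat (d*d) (d*d)"
    and W: "msubspace (d*d) W" and gens: "\<And>g. g \<in> G \<Longrightarrow> phi2 C g \<in> W"
  shows "phi2 C ` mspan (d*d) G \<subseteq> W"
proof
  fix Y assume "Y \<in> phi2 C ` mspan (d*d) G"
  then obtain c F where Y: "Y = phi2 C (msum (d*d) (\<lambda>B. c B \<cdot>\<^sub>m B) F)" "finite F" "F \<subseteq> G"
    unfolding mspan_def by blast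
  have FC: "\<And>B. B \<in> F \<Longrightarrow> B \<in> carrier_mat (d*d) (d*d)" using Y(3) G by blast
  have "Y = msum (d*d) (\<lambda>B. phi2 C (c B \<cdot>\<^sub>m B)) F"
    unfolding Y(1) by (rule phi2_msum[OF C Y(2)]) (use FC in simp)
  also have "\<dots> = msum (d*d) (\<lambda>B. c B \<cdot>\<^sub>m phi2 C B) F"
    by (rule msum_cong) (use phi2_smult[OF C] FC in simp)
  also have "\<dots> \<in> W"
  proof (rule msubspace_msum[OF W Y(2)])
    fix B assume "B \<in> F"
    then show "c B \<cdot>\<^sub>m phi2 C B \<in> W" using gens Y(3) W by (auto simp: msubspace_def)
  qed
  finally show "Y \<in> W" .
qed

lemma phi2_dsum_subset:
  assumes C: "C \<in> carrier_mat d d" and I: "finite I" and p: "bij_betw p I I"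
    and W: "\<And>i. i \<in> I \<Longrightarrow> W i \<subseteq> carrier_mat (d*d) (d*d)"
    and move: "\<And>i. i \<in> I \<Longrightarrow> phi2 C ` W i \<subseteq> W (p i)"
  shows "phi2 C ` dsum (d*d) I W \<subseteq> dsum (d*d) I W"
proof
  fix X assume "X \<in> phi2 C ` dsum (d*d) I W"
  then obtain g where g: "X = phi2 C (msum (d*d) g I)" "\<forall>i\<in>I. g i \<in> W i"
    unfolding dsum_def by blast
  let ?p' = "inv_into I p"
  have p': "bij_betw ?p' I I" by (rule bij_betw_inv_into[OF p])
  have "X = msum (d*d) (\<lambda>i. phi2 C (g i)) I"
    unfolding g(1) using g(2) W by (intro phi2_msum[OF C I]) blast
  also have "\<dots> = msum (d*d) (\<lambda>j. phi2 C (g (?p' j))) I" by (rule msum_reindex[OF p'])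
  finally have X: "X = msum (d*d) (\<lambda>j. phi2 C (g (?p' j))) I" .
  have "phi2 C (g (?p' j)) \<in> W j" if j: "j \<in> I" for j
  proof -
    have i: "?p' j \<in> I" using p' j bij_betwE by blast
    have "phi2 C (g (?p' j)) \<in> W (p (?p' j))" using move[OF i] g(2) i by blast
    then show ?thesis unfolding bij_betw_inv_into_right[OF p j] .
  qed
  then show "X \<in> dsum (d*d) I W" unfolding X by (rule msum_in_dsum)
qed

lemma msubspace_phi2_image:
  assumes C: "C \<in> carrier_mat d d" and W: "msubspace (d*d) W"
  shows "msubspace (d*d) (phi2 C ` W)"
  unfolding msubspace_def
proof (intro conjI ballI allI)
  have Wc: "\<And>w. w \<in> W \<Longrightarrow> w \<in> carrier_mat (d*d) (d*d)"
    using W msubspace_carrier by blast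
  show "phi2 C ` W \<subseteq> carrier_mat (d*d) (d*d)" using phi2_carrier[OF C] Wc by blast
  have "0\<^sub>m (d*d) (d*d) \<in> W" using W by (simp add: msubspace_def)
  then have "phi2 C (0\<^sub>m (d*d) (d*d)) \<in> phi2 C ` W" by (rule imageI)
  then show "0\<^sub>m (d*d) (d*d) \<in> phi2 C ` W" by (simp only: phi2_zero[OF C])
  fix A B assume "A \<in> phi2 C ` W" "B \<in> phi2 C ` W"
  then obtain a b where ab: "a \<in> W" "b \<in> W" "A = phi2 C a" "B = phi2 C b" by blast
  have "A + B = phi2 C (a + b)" using phi2_add[OF C Wc[OF ab(1)] Wc[OF ab(2)]] ab by simp
  moreover have "a + b \<in> W" using ab W by (simp add: msubspace_def)
  ultimately show "A + B \<in> phi2 C ` W" by (simp only: imageI)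
next
  have Wc: "\<And>w. w \<in> W \<Longrightarrow> w \<in> carrier_mat (d*d) (d*d)"
    using W msubspace_carrier by blast
  fix k A assume "A \<in> phi2 C ` W"
  then obtain a where a: "a \<in> W" "A = phi2 C a" by blast
  have "k \<cdot>\<^sub>m A = phi2 C (k \<cdot>\<^sub>m a)" using phi2_smult[OF C Wc[OF a(1)]] a by simp
  moreover have "k \<cdot>\<^sub>m a \<in> W" using a W by (simp add: msubspace_def)
  ultimately show "k \<cdot>\<^sub>m A \<in> phi2 C ` W" by (simp only: imageI)
qed

lemma lin_iso_phi2_image:
  assumes C: "C \<in> carrier_mat d d" and unitary: "adj C * C = 1\<^sub>m d"
    and W: "W \<subseteq> carrier_mat (d*d) (d*d)"
  shows "lin_iso (phi2 C ` W) W"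
  unfolding lin_iso_def
proof (intro exI[of _ "phi2 (adj C)"] conjI ballI allI)
  have aC: "adj C \<in> carrier_mat d d" using adj_carrier2[OF C] .
  have CW: "phi2 C ` W \<subseteq> carrier_mat (d*d) (d*d)" using phi2_carrier[OF C] W by blast
  have inv: "phi2 (adj C) (phi2 C a) = a" if "a \<in> W" for a
  proof -
    have a: "a \<in> carrier_mat (d*d) (d*d)" using W that by blast
    have "phi2 (adj C) (phi2 C a) = phi2 (adj C * C) a" by (rule phi2_mult[OF aC C a, symmetric])
    also have "\<dots> = a" unfolding unitary by (rule phi2_one[OF a])
    finally show ?thesis .
  qed
  show "bij_betw (phi2 (adj C)) (phi2 C ` W) W"
  proof (rule bij_betwI')
    show "\<And>x y. x \<in> phi2 C ` W \<Longrightarrow> y \<in> phi2 C ` W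
        \<Longrightarrow> phi2 (adj C) x = phi2 (adj C) y \<longleftrightarrow> x = y"
      using inv by auto
    show "\<And>x. x \<in> phi2 C ` W \<Longrightarrow> phi2 (adj C) x \<in> W" using inv by auto
    show "\<And>y. y \<in> W \<Longrightarrow> \<exists>x\<in>phi2 C ` W. y = phi2 (adj C) x"
      using inv by auto
  qed
  fix A B assume "A \<in> phi2 C ` W" "B \<in> phi2 C ` W"
  then show "phi2 (adj C) (A + B) = phi2 (adj C) A + phi2 (adj C) B"
    using CW by (intro phi2_add[OF aC]) auto
next
  have CW: "phi2 C ` W \<subseteq> carrier_mat (d*d) (d*d)" using phi2_carrier[OF C] W by blast
  fix k A assume "A \<in> phi2 C ` W"
  then show "phi2 (adj C) (k \<cdot>\<^sub>m A) = k \<cdot>\<^sub>m phi2 (adj C) A"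
    using CW adj_carrier2[OF C] by (intro phi2_smult) auto
qed

lemma sign_smult_swap: "e = 1 \<or> e = -1 \<Longrightarrow> X = e \<cdot>\<^sub>m t
    \<Longrightarrow> t = e \<cdot>\<^sub>m (X :: complex mat)"
  by auto

lemma phi2_Vtau_gens: assumes q: "q \<ge> 1" and C: "C \<in> clifford q"
  and t: "\<tau> \<in> sigma q" "\<tau>' \<in> sigma q"
  and ct: "C * \<tau> * adj C = \<tau>'" and B: "B \<in> Vtau_gens q \<tau>"
  shows "phi2 C B \<in> Vtau q \<tau>'"
proof -
  obtain s s' c where sB: "B = kron s s'" "s \<in> sigma q" "s' \<in> sigma q" "s * s' = c \<cdot>\<^sub>m \<tau>"
    using B unfolding Vtau_gens_def by blast
  have Cc: "C \<in> carrier_mat (2^q) (2^q)" using C clifford_carrier by blast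
  have sc: "s \<in> carrier_mat (2^q) (2^q)" "s' \<in> carrier_mat (2^q) (2^q)" "\<tau> \<in> carrier_mat (2^q) (2^q)"
    using sB t sigma_carrier by blast+
  obtain u e1 where u: "u \<in> sigma q" "e1 = 1 \<or> e1 = -1" "C * s * adj C = e1 \<cdot>\<^sub>m u"
    using clifford_conj_sigma[OF q C sB(2)] by blast
  obtain u' e2 where u': "u' \<in> sigma q" "e2 = 1 \<or> e2 = -1" "C * s' * adj C = e2 \<cdot>\<^sub>m u'"
    using clifford_conj_sigma[OF q C sB(3)] by blast
  have uc: "u \<in> carrier_mat (2^q) (2^q)" "u' \<in> carrier_mat (2^q) (2^q)"
    using u u' sigma_carrier by blast+
  have "phi2 C B = kron (e1 \<cdot>\<^sub>m u) (e2 \<cdot>\<^sub>m u')"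
    unfolding sB(1) phi2_kron[OF Cc sc(1) sc(2)] u(3) u'(3) ..
  also have "\<dots> = (e1 * e2) \<cdot>\<^sub>m kron u u'" by (simp add: mult.commute)
  finally have pB: "phi2 C B = (e1 * e2) \<cdot>\<^sub>m kron u u'" .
  have uu: "u * u' = (e1 * e2 * c) \<cdot>\<^sub>m \<tau>'"
  proof -
    have "u = e1 \<cdot>\<^sub>m (C * s * adj C)" by (rule sign_smult_swap[OF u(2) u(3)])
    moreover have "u' = e2 \<cdot>\<^sub>m (C * s' * adj C)" by (rule sign_smult_swap[OF u'(2) u'(3)])
    ultimately have "u * u' = (e1 * e2) \<cdot>\<^sub>m ((C * s * adj C) * (C * s' * adj C))"
      using Cc sc carrier_matD[OF Cc] by (simp add: mult_smult_distrib mult.commute)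
    also have "(C * s * adj C) * (C * s' * adj C) = C * (s * s') * adj C"
      by (rule clifford_conj_mult[OF C sc(1,2)])
    also have "\<dots> = c \<cdot>\<^sub>m (C * \<tau> * adj C)" unfolding sB(4)
      using Cc sc carrier_matD[OF Cc]
      by (simp add: mult_smult_distrib)
    finally show ?thesis unfolding ct by simp
  qed
  have "kron u u' \<in> Vtau_gens q \<tau>'" unfolding Vtau_gens_def using u(1) u'(1) uu by blast
  hence "kron u u' \<in> Vtau q \<tau>'" unfolding Vtau_eq_mspan
    by (rule mspan_superset[OF Vtau_gens_carrier])
  then show ?thesis unfolding pB using msubspace_Vtau[of q \<tau>'] by (simp add: msubspace_def)
qed

lemma phi2_Vtau:
  assumes q: "q \<ge> 1" and C: "C \<in> clifford q" and t: "\<tau> \<in> sigma q" "\<tau>' \<in> sigma q"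
    and ct: "C * \<tau> * adj C = \<tau>'"
  shows "phi2 C ` Vtau q \<tau> \<subseteq> Vtau q \<tau>'"
  unfolding Vtau_eq_mspan[of q \<tau>]
  using clifford_carrier[OF C] Vtau_gens_carrier msubspace_Vtau phi2_Vtau_gens[OF q C t ct]
  by (rule phi2_mspan_subset)

definition clifford_perm :: "nat \<Rightarrow> complex mat \<Rightarrow> complex mat \<Rightarrow> complex mat" where
  "clifford_perm q C \<tau> = (SOME \<tau>''. \<tau>'' \<in> sigma q
      \<and> (\<exists>e. (e = 1 \<or> e = -1) \<and> C * \<tau> * adj C = e \<cdot>\<^sub>m \<tau>''))"

lemma clifford_perm_prop: assumes "q \<ge> 1" "C \<in> clifford q" "\<tau> \<in> sigma q"
  shows "clifford_perm q C \<tau> \<in> sigma q \<and> (\<exists>e. (e = 1 \<or> e = -1)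
      \<and> C * \<tau> * adj C = e \<cdot>\<^sub>m clifford_perm q C \<tau>)"
  unfolding clifford_perm_def by (rule someI_ex) (use clifford_conj_sigma[OF assms] in blast)

lemma bij_clifford_perm: assumes q: "q \<ge> 1" and C: "C \<in> clifford q"
  shows "bij_betw (clifford_perm q C) (sigma q) (sigma q)"
proof -
  have im: "clifford_perm q C ` sigma q \<subseteq> sigma q" using clifford_perm_prop[OF q C] by blast
  have inj: "inj_on (clifford_perm q C) (sigma q)"
  proof (rule inj_onI)
    fix t1 t2 assume t1: "t1 \<in> sigma q" and t2: "t2 \<in> sigma q"
      and eq: "clifford_perm q C t1 = clifford_perm q C t2"
    let ?s = "clifford_perm q C t1"
    obtain e1 where e1: "e1 = 1 \<or> e1 = -1" "C * t1 * adj C = e1 \<cdot>\<^sub>m ?s"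
      using clifford_perm_prop[OF q C t1] by blast
    obtain e2 where e2: "e2 = 1 \<or> e2 = -1" "C * t2 * adj C = e2 \<cdot>\<^sub>m ?s"
      using clifford_perm_prop[OF q C t2] eq by auto
    have c: "C \<in> carrier_mat (2^q) (2^q)" "adj C \<in> carrier_mat (2^q) (2^q)"
      using C clifford_carrier adj_carrier2 by blast+
    have sc: "?s \<in> carrier_mat (2^q) (2^q)" using clifford_perm_prop[OF q C t1] sigma_carrier by blast
    have "t1 = adj C * (e1 \<cdot>\<^sub>m ?s) * C"
      using clifford_conj_cancel[OF C sigma_carrier[OF t1]] e1(2) by simp
    hence h1: "t1 = e1 \<cdot>\<^sub>m (adj C * ?s * C)" using c sc by (simp add: mult_smult_distrib)
    have "t2 = adj C * (e2 \<cdot>\<^sub>m ?s) * C"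
      using clifford_conj_cancel[OF C sigma_carrier[OF t2]] e2(2) by simp
    hence h2: "t2 = e2 \<cdot>\<^sub>m (adj C * ?s * C)" using c sc by (simp add: mult_smult_distrib)
    have "t1 = (e1 * e2) \<cdot>\<^sub>m t2" using h1 h2 e1(1) e2(1) by auto
    then show "t1 = t2" using sigma_smult_eq[OF t1 t2] by blast
  qed
  have "clifford_perm q C ` sigma q = sigma q" by (rule endo_inj_surj[OF finite_sigma im inj])
  then show ?thesis using inj unfolding bij_betw_def by blast
qed

lemma clifford_stab_transport:
  assumes C: "C \<in> clifford q" and A: "A \<in> clifford q"
    and B: "B \<in> clifford q" "adj B \<in> clifford q"
    and t: "\<tau> \<in> carrier_mat (2^q) (2^q)" "\<tau>'' \<in> carrier_mat (2^q) (2^q)"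
    and A\<tau>: "A * \<tau> * adj A = \<tau>'" and B\<tau>: "B * \<tau> * adj B = \<tau>''"
    and C\<tau>: "C * \<tau>' * adj C = e \<cdot>\<^sub>m \<tau>''" and e: "e = 1 \<or> e = -1"
  shows "adj B * C * A \<in> clifford_stab q \<tau>"
proof -
  let ?n = "2^q"
  have c: "C \<in> carrier_mat ?n ?n" "adj C \<in> carrier_mat ?n ?n" "A \<in> carrier_mat ?n ?n"
    "adj A \<in> carrier_mat ?n ?n" "B \<in> carrier_mat ?n ?n" "adj B \<in> carrier_mat ?n ?n"
    using C A B clifford_carrier adj_carrier2 by blast+
  have adj: "adj (adj B * C * A) = adj A * adj C * B"
    using adj_mult[OF mult_carrier_mat[OF c(6) c(1)] c(3)] adj_mult[OF c(6) c(1)] c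
    by (simp add: assoc_mult_mat_square[where n="2^q"])
  have "adj B * C * A * \<tau> * adj (adj B * C * A) = adj B * (C * (A * \<tau> * adj A) * adj C) * B"
    unfolding adj using c t
      by (simp add: assoc_mult_mat_square[where n="2^q"] mult_carrier_mat_square[where n="2^q"])
  also have "\<dots> = e \<cdot>\<^sub>m (adj B * \<tau>'' * B)" unfolding A\<tau> C\<tau> using c t
    by (simp add: mult_smult_distrib)
  also have "adj B * \<tau>'' * B = \<tau>" using clifford_conj_cancel[OF B(1) t(1)] B\<tau> by simp
  finally show ?thesis
    unfolding clifford_stab_def using e mult_mem_clifford[OF mult_mem_clifford[OF B(2) C] A]
    by (auto simp: neg_one_smult)
qed

lemma clifford_transversal:
  assumes q: "q \<ge> 1" and t: "\<tau> \<in> sigma q"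
  obtains Cf where "Cf \<tau> = 1\<^sub>m (2^q)"
    and "\<And>\<tau>'. \<tau>' \<in> sigma q \<Longrightarrow>
           Cf \<tau>' \<in> clifford q \<and> adj (Cf \<tau>') \<in> clifford q \<and> Cf \<tau>' * \<tau> * adj (Cf \<tau>') = \<tau>'"
proof -
  define Cf where "Cf \<tau>' = (if \<tau>' = \<tau> then 1\<^sub>m (2^q)
      else SOME C. C \<in> clifford q \<and> adj C \<in> clifford q \<and> C * \<tau> * adj C = \<tau>')" for \<tau>'
  have "Cf \<tau>' \<in> clifford q \<and> adj (Cf \<tau>') \<in> clifford q
      \<and> Cf \<tau>' * \<tau> * adj (Cf \<tau>') = \<tau>'"
    if t': "\<tau>' \<in> sigma q" for \<tau>'
  proof (cases "\<tau>' = \<tau>")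
    case True
    then show ?thesis using one_mem_clifford[of q] sigma_carrier[OF t] by (simp add: Cf_def)
  next
    case False
    then show ?thesis using someI_ex[OF clifford_transitive_sigma[OF q t t']] by (simp add: Cf_def)
  qed
  moreover have "Cf \<tau> = 1\<^sub>m (2^q)" by (simp add: Cf_def)
  ultimately show ?thesis using that by blast
qed

lemma phi2_transversal_translate:
  assumes q: "q \<ge> 1" and t: "\<tau> \<in> sigma q"
    and Cf: "\<And>\<tau>'. \<tau>' \<in> sigma q \<Longrightarrow> Cf \<tau>' \<in> clifford q
        \<and> adj (Cf \<tau>') \<in> clifford q \<and> Cf \<tau>' * \<tau> * adj (Cf \<tau>') = \<tau>'"
    and Winv: "\<forall>D\<in>clifford_stab q \<tau>. phi2 D ` Wt \<subseteq> Wt"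
    and Wc: "Wt \<subseteq> carrier_mat (2^q * 2^q) (2^q * 2^q)"
    and C: "C \<in> clifford q" and t': "\<tau>' \<in> sigma q"
  shows "phi2 C ` phi2 (Cf \<tau>') ` Wt \<subseteq> phi2 (Cf (clifford_perm q C \<tau>')) ` Wt"
proof -
  let ?s = "clifford_perm q C \<tau>'" and ?n = "2^q"
  have s: "?s \<in> sigma q" using clifford_perm_prop[OF q C t'] by blast
  obtain e where e: "e = 1 \<or> e = -1" "C * \<tau>' * adj C = e \<cdot>\<^sub>m ?s"
    using clifford_perm_prop[OF q C t'] by blast
  define D where "D = adj (Cf ?s) * C * Cf \<tau>'"
  have D: "D \<in> clifford_stab q \<tau>" unfolding D_def
    using Cf[OF t'] Cf[OF s] e sigma_carrier[OF t] sigma_carrier[OF s]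
    by (intro clifford_stab_transport[OF C, where \<tau>'=\<tau>' and \<tau>''="?s" and e=e]) auto
  have c: "C \<in> carrier_mat ?n ?n" "Cf \<tau>' \<in> carrier_mat ?n ?n" "Cf ?s \<in> carrier_mat ?n ?n"
    "adj (Cf ?s) \<in> carrier_mat ?n ?n" "D \<in> carrier_mat ?n ?n"
    using C Cf[OF t'] Cf[OF s] D clifford_carrier adj_carrier2 unfolding clifford_stab_def by blast+
  have "Cf ?s * D = (Cf ?s * adj (Cf ?s)) * C * Cf \<tau>'"
    unfolding D_def using c
      by (simp add: assoc_mult_mat_square[where n="2^q"] mult_carrier_mat_square[where n="2^q"])
  also have "\<dots> = C * Cf \<tau>'" unfolding clifford_mult_adj[OF conjunct1[OF Cf[OF s]]] using c by simp
  finally have CD: "C * Cf \<tau>' = Cf ?s * D" by simp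
  show ?thesis
  proof
    fix X assume "X \<in> phi2 C ` phi2 (Cf \<tau>') ` Wt"
    then obtain w where w: "w \<in> Wt" and X: "X = phi2 C (phi2 (Cf \<tau>') w)" by blast
    have wc: "w \<in> carrier_mat (?n * ?n) (?n * ?n)" using Wc w by blast
    have "X = phi2 (C * Cf \<tau>') w" unfolding X by (rule phi2_mult[OF c(1,2) wc, symmetric])
    also have "\<dots> = phi2 (Cf ?s) (phi2 D w)" unfolding CD by (rule phi2_mult[OF c(3,5) wc])
    finally show "X \<in> phi2 (Cf ?s) ` Wt" using Winv D w by blast
  qed
qed

lemma exists_clifford_invariant_family:
  assumes q: "q \<ge> 1" and t: "\<tau> \<in> sigma q" and Wt: "msubspace (2 ^ q * 2 ^ q) Wt"
    and Wt_V: "Wt \<subseteq> Vtau q \<tau>" and Wt_inv: "\<forall>C \<in> clifford_stab q \<tau>. phi2 C ` Wt \<subseteq> Wt"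
  shows "\<exists>W :: complex mat \<Rightarrow> complex mat set.
           W \<tau> = Wt \<and>
           (\<forall>\<tau>' \<in> sigma q. msubspace (2 ^ q * 2 ^ q) (W \<tau>') \<and> W \<tau>' \<subseteq> Vtau q \<tau>' \<and> lin_iso (W \<tau>') Wt) \<and>
           is_direct_sum (2 ^ q * 2 ^ q) (dsum (2 ^ q * 2 ^ q) (sigma q) W) (sigma q) W \<and>
           (\<forall>C \<in> clifford q. phi2 C ` dsum (2 ^ q * 2 ^ q) (sigma q) W \<subseteq> dsum (2 ^ q * 2 ^ q) (sigma q) W)"
proof -
  let ?N = "2 ^ q * 2 ^ q"
  have Wc: "Wt \<subseteq> carrier_mat ?N ?N" using Wt by (simp add: msubspace_def)
  obtain Cf where Cf_id: "Cf \<tau> = 1\<^sub>m (2^q)" and Cf: "\<And>\<tau>'. \<tau>' \<in> sigma q \<Longrightarrow>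
      Cf \<tau>' \<in> clifford q \<and> adj (Cf \<tau>') \<in> clifford q \<and> Cf \<tau>' * \<tau> * adj (Cf \<tau>') = \<tau>'"
    using clifford_transversal[OF q t] by blast
  have Cfc: "Cf \<tau>' \<in> carrier_mat (2^q) (2^q)" if "\<tau>' \<in> sigma q" for \<tau>'
    using Cf[OF that] clifford_carrier by blast
  define W where "W \<tau>' = phi2 (Cf \<tau>') ` Wt" for \<tau>'
  have "W \<tau> = (\<lambda>w. w) ` Wt" unfolding W_def Cf_id using Wc
    by (intro image_cong refl) (auto simp: phi2_one)
  then have W_id: "W \<tau> = Wt" by simp
  have W_V: "W \<tau>' \<subseteq> Vtau q \<tau>'" if t': "\<tau>' \<in> sigma q" for \<tau>'
  proof -
    have "W \<tau>' \<subseteq> phi2 (Cf \<tau>') ` Vtau q \<tau>" unfolding W_def using Wt_V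
      by (rule image_mono)
    also have "\<dots> \<subseteq> Vtau q \<tau>'" using Cf[OF t'] by (intro phi2_Vtau[OF q _ t t']) auto
    finally show ?thesis .
  qed
  have W_sub: "msubspace ?N (W \<tau>')" if "\<tau>' \<in> sigma q" for \<tau>'
    unfolding W_def by (rule msubspace_phi2_image[OF Cfc[OF that] Wt])
  have W_iso: "lin_iso (W \<tau>') Wt" if "\<tau>' \<in> sigma q" for \<tau>'
    unfolding W_def using Cf[OF that]
      by (intro lin_iso_phi2_image[OF Cfc[OF that] _ Wc] clifford_adj_mult) auto
  have W_carrier: "W \<tau>' \<subseteq> carrier_mat ?N ?N" if "\<tau>' \<in> sigma q" for \<tau>'
    using W_sub[OF that] by (simp add: msubspace_def)
  have W_inv: "phi2 C ` dsum ?N (sigma q) W \<subseteq> dsum ?N (sigma q) W" if C: "C \<in> clifford q" for C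
  proof (rule phi2_dsum_subset[OF clifford_carrier[OF C] finite_sigma bij_clifford_perm[OF q C] W_carrier])
    show "phi2 C ` W \<tau>' \<subseteq> W (clifford_perm q C \<tau>')" if "\<tau>' \<in> sigma q" for \<tau>'
      unfolding W_def by (rule phi2_transversal_translate[OF q t Cf Wt_inv Wc C that])
  qed
  have W_direct: "is_direct_sum ?N (dsum ?N (sigma q) W) (sigma q) W"
    using W_V by (rule is_direct_sum_subspaces[OF Vspace_direct_sum])
  show ?thesis by (intro exI[of _ W] conjI ballI W_id W_sub W_V W_iso W_direct W_inv)
qed

theorem lemma7:
  fixes q :: nat
  assumes "q \<ge> 1"
  shows "is_direct_sum (2 ^ q * 2 ^ q) (Vspace q) (sigma q) (Vtau q) \<and>
         (\<forall>\<tau> \<in> sigma q. \<forall>Wt.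
           msubspace (2 ^ q * 2 ^ q) Wt \<and> Wt \<subseteq> Vtau q \<tau> \<and>
           (\<forall>C \<in> clifford_stab q \<tau>. phi2 C ` Wt \<subseteq> Wt)
         \<longrightarrow> (\<exists>W :: complex mat \<Rightarrow> complex mat set.
               W \<tau> = Wt \<and>
               (\<forall>\<tau>' \<in> sigma q. msubspace (2 ^ q * 2 ^ q) (W \<tau>') \<and> W \<tau>' \<subseteq> Vtau q \<tau>' \<and>
                                 lin_iso (W \<tau>') Wt) \<and>
               is_direct_sum (2 ^ q * 2 ^ q) (dsum (2 ^ q * 2 ^ q) (sigma q) W) (sigma q) W \<and>
               (\<forall>C \<in> clifford q. phi2 C ` dsum (2 ^ q * 2 ^ q) (sigma q) W
                                   \<subseteq> dsum (2 ^ q * 2 ^ q) (sigma q) W)))"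
  by (intro conjI Vspace_direct_sum ballI allI impI, elim conjE)
     (rule exists_clifford_invariant_family[OF assms])

end
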